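(* Every EDT-Nash equilibrium is an EDT equilibrium. In extensive-form games without absentmindedness, a strategy profile is an EDT-Nash equilibrium if and only if it is a CDT-Nash equilibrium. In extensive-form games with perfect recall, a strategy profile is an EDT-Nash equilibrium if and only if it is a Nash equilibrium.
   Context: An extensive-form game consists of a finite rooted tree (nodes $\mathcal H$, leaves $\mathcal Z$, actions $A_h$), players $\mathcal N$ plus chance (with fixed action distributions), utilities $u_i:\mathcal Z\to\mathbb R_{\ge0}$, and partitions $\mathcal I_i$ of each player's nodes into infosets with common action sets $A_I$. For a node $h$ with root-to-$h$ path $(h_0,\dots,h_{d-1})$ (excluding $h$), $\mathrm{obs}(h)=(i_k,I_k,a_k)_k$ lists the player at, infoset of, and action taken at each $h_k$; $\mathrm{obs}_i(h)$ is the subsequence with $i_k=i$. Player $i$ has perfect recall if $\mathrm{obs}_i(h)=\mathrm{obs}_i(h')$ for $h,h'$ in a common infoset of $i$; the game has perfect recall if all players do. The game has absentmindedness if some infoset appears more than once among the $I_k$ in $\mathrm{obs}(h)$ for some $h$. A behavioral strategy $\pi_i$ assigns $\pi_i(\cdot\mid I)\in\Delta(A_I)$; $\mathbb P(h\mid\pi)$ is the reach probability of $h$; $U_i(\pi)=\sum_z\mathbb P(z\mid\pi)u_i(z)$; realization equivalence means equal reach probabilities at all nodes. $\pi_i^{I\mapsto\sigma}$ plays $\sigma$ at $I$, otherwise $\pi_i$. Nash: each $\pi_i\in\arg\max U_i(\cdot,\pi_{-i})$. EDT equilibrium: for all $i$, $I\in\mathcal I_i$, $\pi_i(\cdot\mid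 I)\in\arg\max_{\sigma}U_i(\pi_i^{I\mapsto\sigma},\pi_{-i})$. CDT equilibrium: each $\pi_i$ is a KKT point of maximizing $U_i(\cdot,\pi_{-i})$ over $\prod_I\Delta(A_I)$. In a single-player game (Player 1): let $I^{\mathrm{1st}}$ be the nodes $h\in I$ such that $I$ does not appear in $\mathrm{obs}(h)$, $\mathbb P(I\mid\pi)=\sum_{h\in I^{\mathrm{1st}}}\mathbb P(h\mid\pi)$, and $\mathrm{Fr}(I\mid\pi)=\sum_{h\in I}\mathbb P(h\mid\pi)$. The CDT utility of $\sigma\in\Delta(A_I)$ is $U_1^{\mathrm{CDT}}(\sigma\mid\pi,I)=U_1(\pi)+\sum_{a\in A_I}(\sigma(a)-\pi(a\mid I))\,\partial U_1(\pi)/\partial\pi(a\mid I)$, where $U_1$ is viewed as a polynomial in the variables $\pi(a\mid I)$. A strategy $\pi$ is EDT-rational (resp. CDT-rational) if there is a sequence $(\pi^{(k)},\varepsilon^{(k)})_{k\in\mathbb N}$ with each $\pi^{(k)}$ fully mixed ($\pi^{(k)}(a\mid I)>0$ for all $I,a$), $\pi^{(k)}\to\pi$, $\varepsilon^{(k)}>0$, $\varepsilon^{(k)}\to0$, and for each $k$, all $I$ with $\mathbb P(I\mid\pi^{(k)})>0$ (resp. $\mathrm{Fr}(I\mid\pi^{(k)})>0$) and all $\sigma\in\Delta(A_I)$: $\frac{1}{\mathbb P(I\mid\pi^{(k)})}(U_1(\pi^{(k),I\mapsto\sigma})-U_1(\pi^{(k)}))\le\varepsilon^{(k)}$ (resp.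 $\frac{1}{\mathrm{Fr}(I\mid\pi^{(k)})}(U_1^{\mathrm{CDT}}(\sigma\mid\pi^{(k)},I)-U_1(\pi^{(k)}))\le\varepsilon^{(k)}$). A profile $\pi$ is an EDT-Nash (resp. CDT-Nash) equilibrium if it is an EDT (resp. CDT) equilibrium and for each player $i$, in the single-player game from $i$'s perspective where the others play the fixed $\pi_{-i}$, $\pi_i$ is realization-equivalent to an EDT-rational (resp. CDT-rational) strategy. *)

theory Defs
  imports "HOL-Analysis.Analysis"
begin

text \<open>Nodes are the action sequences from the root
  (a finite prefix-closed set of lists). who h = None marks chance nodes,
  who h = Some i marks nodes of player i. info h is the label of the
  infoset containing a player node h.\<close>

record ('a, 'p, 'i) game =
  nodes  :: "'a list set"
  who    :: "'a list \<Rightarrow> 'p option"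
  chance :: "'a list \<Rightarrow> 'a \<Rightarrow> real"
  info   :: "'a list \<Rightarrow> 'i"
  util   :: "'p \<Rightarrow> 'a list \<Rightarrow> real"

type_synonym ('i, 'a) profile = "'i \<Rightarrow> 'a \<Rightarrow> real"

definition acts :: "('a, 'p, 'i) game \<Rightarrow> 'a list \<Rightarrow> 'a set" where
  "acts G h = {a. h @ [a] \<in> nodes G}"

definition leaves :: "('a, 'p, 'i) game \<Rightarrow> 'a list set" where
  "leaves G = {h \<in> nodes G. acts G h = {}}"

definition pnodes :: "('a, 'p, 'i) game \<Rightarrow> 'p \<Rightarrow> 'a list set" where
  "pnodes G i = {h \<in> nodes G. acts G h \<noteq> {} \<and> who G h = Some i}"

definition infosets :: "('a, 'p, 'i) game \<Rightarrow> 'p \<Rightarrow> 'i set" where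
  "infosets G i = info G ` pnodes G i"

definition all_infosets :: "('a, 'p, 'i) game \<Rightarrow> 'i set" where
  "all_infosets G = (\<Union>i. infosets G i)"

definition inI :: "('a, 'p, 'i) game \<Rightarrow> 'i \<Rightarrow> 'a list set" where
  "inI G I = {h \<in> nodes G. acts G h \<noteq> {} \<and> who G h \<noteq> None \<and> info G h = I}"

definition iacts :: "('a, 'p, 'i) game \<Rightarrow> 'i \<Rightarrow> 'a set" where
  "iacts G I = acts G (SOME h. h \<in> inI G I)"

definition efg :: "('a, 'p, 'i) game \<Rightarrow> bool" where
  "efg G \<longleftrightarrow>
     finite (nodes G) \<and> [] \<in> nodes G \<and>
     (\<forall>h a. h @ [a] \<in> nodes G \<longrightarrow> h \<in> nodes G) \<and>
     (\<forall>h \<in> nodes G. acts G h \<noteq> {} \<and> who G h = None \<longrightarrow>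
        (\<forall>a \<in> acts G h. 0 \<le> chance G h a) \<and> sum (chance G h) (acts G h) = 1) \<and>
     (\<forall>h \<in> nodes G. \<forall>h' \<in> nodes G.
        acts G h \<noteq> {} \<and> who G h \<noteq> None \<and> acts G h' \<noteq> {} \<and> who G h' \<noteq> None \<and>
        info G h = info G h' \<longrightarrow> who G h = who G h' \<and> acts G h = acts G h') \<and>
     (\<forall>i. \<forall>z \<in> leaves G. 0 \<le> util G i z)"

definition obs :: "('a, 'p, 'i) game \<Rightarrow> 'a list \<Rightarrow> ('p option \<times> 'i \<times> 'a) list" where
  "obs G h = map (\<lambda>k. (who G (take k h), info G (take k h), h ! k)) [0..<length h]"

definition obs_i :: "('a, 'p, 'i) game \<Rightarrow> 'p \<Rightarrow> 'a list \<Rightarrow> ('p option \<times> 'i \<times> 'a) list" where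
  "obs_i G i h = filter (\<lambda>(j, _, _). j = Some i) (obs G h)"

definition perfect_recall :: "('a, 'p, 'i) game \<Rightarrow> bool" where
  "perfect_recall G \<longleftrightarrow>
     (\<forall>i. \<forall>h \<in> pnodes G i. \<forall>h' \<in> pnodes G i. info G h = info G h' \<longrightarrow> obs_i G i h = obs_i G i h')"

definition path_infosets :: "('a, 'p, 'i) game \<Rightarrow> 'a list \<Rightarrow> 'i list" where
  "path_infosets G h = map (\<lambda>(_, I, _). I) (filter (\<lambda>(j, _, _). j \<noteq> None) (obs G h))"

definition absentminded :: "('a, 'p, 'i) game \<Rightarrow> bool" where
  "absentminded G \<longleftrightarrow> (\<exists>h \<in> nodes G. \<not> distinct (path_infosets G h))"

definition actprob :: "('a, 'p, 'i) game \<Rightarrow> ('i, 'a) profile \<Rightarrow> 'a list \<Rightarrow> 'a \<Rightarrow> real" where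
  "actprob G \<pi> h a = (case who G h of None \<Rightarrow> chance G h a | Some _ \<Rightarrow> \<pi> (info G h) a)"

definition reach :: "('a, 'p, 'i) game \<Rightarrow> ('i, 'a) profile \<Rightarrow> 'a list \<Rightarrow> real" where
  "reach G \<pi> h = (\<Prod>k<length h. actprob G \<pi> (take k h) (h ! k))"

text \<open>Expected utility; as a formula it is a polynomial in the values \<pi> I a.\<close>
definition U :: "('a, 'p, 'i) game \<Rightarrow> 'p \<Rightarrow> ('i, 'a) profile \<Rightarrow> real" where
  "U G i \<pi> = (\<Sum>z \<in> leaves G. reach G \<pi> z * util G i z)"

definition behav :: "('a, 'p, 'i) game \<Rightarrow> 'i \<Rightarrow> ('a \<Rightarrow> real) \<Rightarrow> bool" where
  "behav G I \<sigma> \<longleftrightarrow> (\<forall>a \<in> iacts G I. 0 \<le> \<sigma> a) \<and> sum \<sigma> (iacts G I) = 1 \<and>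
                     (\<forall>a. a \<notin> iacts G I \<longrightarrow> \<sigma> a = 0)"

definition profile :: "('a, 'p, 'i) game \<Rightarrow> ('i, 'a) profile \<Rightarrow> bool" where
  "profile G \<pi> \<longleftrightarrow> (\<forall>I \<in> all_infosets G. behav G I (\<pi> I))"

definition devs :: "('a, 'p, 'i) game \<Rightarrow> 'p \<Rightarrow> ('i, 'a) profile \<Rightarrow> ('i, 'a) profile \<Rightarrow> bool" where
  "devs G i \<pi> \<pi>' \<longleftrightarrow> profile G \<pi>' \<and> (\<forall>I. I \<notin> infosets G i \<longrightarrow> \<pi>' I = \<pi> I)"

definition Nash :: "('a, 'p, 'i) game \<Rightarrow> ('i, 'a) profile \<Rightarrow> bool" where
  "Nash G \<pi> \<longleftrightarrow> profile G \<pi> \<and> (\<forall>i \<pi>'. devs G i \<pi> \<pi>' \<longrightarrow> U G i \<pi>' \<le> U G i \<pi>)"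

definition EDT_eq :: "('a, 'p, 'i) game \<Rightarrow> ('i, 'a) profile \<Rightarrow> bool" where
  "EDT_eq G \<pi> \<longleftrightarrow> profile G \<pi> \<and>
     (\<forall>i. \<forall>I \<in> infosets G i. \<forall>\<sigma>. behav G I \<sigma> \<longrightarrow> U G i (\<pi>(I := \<sigma>)) \<le> U G i \<pi>)"

definition dU :: "('a, 'p, 'i) game \<Rightarrow> 'p \<Rightarrow> ('i, 'a) profile \<Rightarrow> 'i \<Rightarrow> 'a \<Rightarrow> real" where
  "dU G i \<pi> I a = deriv (\<lambda>t. U G i (\<pi>(I := (\<pi> I)(a := t)))) (\<pi> I a)"

text \<open>KKT conditions for maximizing U_i(., pi_{-i}) over the product of simplices.\<close>
definition CDT_eq :: "('a, 'p, 'i) game \<Rightarrow> ('i, 'a) profile \<Rightarrow> bool" where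
  "CDT_eq G \<pi> \<longleftrightarrow> profile G \<pi> \<and>
     (\<forall>i. \<exists>(lam::'i \<Rightarrow> real) (\<mu>::'i \<Rightarrow> 'a \<Rightarrow> real). \<forall>I \<in> infosets G i. \<forall>a \<in> iacts G I.
        dU G i \<pi> I a + \<mu> I a = lam I \<and> 0 \<le> \<mu> I a \<and> \<mu> I a * \<pi> I a = 0)"

definition first_visit :: "('a, 'p, 'i) game \<Rightarrow> 'i \<Rightarrow> 'a list set" where
  "first_visit G I = {h \<in> inI G I. I \<notin> set (path_infosets G h)}"

definition PI :: "('a, 'p, 'i) game \<Rightarrow> ('i, 'a) profile \<Rightarrow> 'i \<Rightarrow> real" where
  "PI G \<pi> I = (\<Sum>h \<in> first_visit G I. reach G \<pi> h)"

definition Fr :: "('a, 'p, 'i) game \<Rightarrow> ('i, 'a) profile \<Rightarrow> 'i \<Rightarrow> real" where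
  "Fr G \<pi> I = (\<Sum>h \<in> inI G I. reach G \<pi> h)"

definition UCDT :: "('a, 'p, 'i) game \<Rightarrow> 'p \<Rightarrow> ('i, 'a) profile \<Rightarrow> 'i \<Rightarrow> ('a \<Rightarrow> real) \<Rightarrow> real" where
  "UCDT G i \<pi> I \<sigma> = U G i \<pi> + (\<Sum>a \<in> iacts G I. (\<sigma> a - \<pi> I a) * dU G i \<pi> I a)"

definition EDT_rational :: "('a, 'p, 'i) game \<Rightarrow> 'p \<Rightarrow> ('i, 'a) profile \<Rightarrow> bool" where
  "EDT_rational G i \<rho> \<longleftrightarrow>
     (\<exists>(\<pi>s :: nat \<Rightarrow> ('i, 'a) profile) (\<epsilon> :: nat \<Rightarrow> real).
        (\<forall>k. devs G i \<rho> (\<pi>s k)) \<and>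
        (\<forall>k. \<forall>I \<in> infosets G i. \<forall>a \<in> iacts G I. 0 < \<pi>s k I a) \<and>
        (\<forall>I a. (\<lambda>k. \<pi>s k I a) \<longlonglongrightarrow> \<rho> I a) \<and>
        (\<forall>k. 0 < \<epsilon> k) \<and> \<epsilon> \<longlonglongrightarrow> 0 \<and>
        (\<forall>k. \<forall>I \<in> infosets G i. PI G (\<pi>s k) I > 0 \<longrightarrow>
           (\<forall>\<sigma>. behav G I \<sigma> \<longrightarrow>
              (U G i ((\<pi>s k)(I := \<sigma>)) - U G i (\<pi>s k)) / PI G (\<pi>s k) I \<le> \<epsilon> k)))"

definition CDT_rational :: "('a, 'p, 'i) game \<Rightarrow> 'p \<Rightarrow> ('i, 'a) profile \<Rightarrow> bool" where
  "CDT_rational G i \<rho> \<longleftrightarrow>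
     (\<exists>(\<pi>s :: nat \<Rightarrow> ('i, 'a) profile) (\<epsilon> :: nat \<Rightarrow> real).
        (\<forall>k. devs G i \<rho> (\<pi>s k)) \<and>
        (\<forall>k. \<forall>I \<in> infosets G i. \<forall>a \<in> iacts G I. 0 < \<pi>s k I a) \<and>
        (\<forall>I a. (\<lambda>k. \<pi>s k I a) \<longlonglongrightarrow> \<rho> I a) \<and>
        (\<forall>k. 0 < \<epsilon> k) \<and> \<epsilon> \<longlonglongrightarrow> 0 \<and>
        (\<forall>k. \<forall>I \<in> infosets G i. Fr G (\<pi>s k) I > 0 \<longrightarrow>
           (\<forall>\<sigma>. behav G I \<sigma> \<longrightarrow>
              (UCDT G i (\<pi>s k) I \<sigma> - U G i (\<pi>s k)) / Fr G (\<pi>s k) I \<le> \<epsilon> k)))"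

definition EDT_Nash :: "('a, 'p, 'i) game \<Rightarrow> ('i, 'a) profile \<Rightarrow> bool" where
  "EDT_Nash G \<pi> \<longleftrightarrow> EDT_eq G \<pi> \<and>
     (\<forall>i. \<exists>\<rho>. devs G i \<pi> \<rho> \<and> (\<forall>h \<in> nodes G. reach G \<rho> h = reach G \<pi> h) \<and> EDT_rational G i \<rho>)"

definition CDT_Nash :: "('a, 'p, 'i) game \<Rightarrow> ('i, 'a) profile \<Rightarrow> bool" where
  "CDT_Nash G \<pi> \<longleftrightarrow> CDT_eq G \<pi> \<and>
     (\<forall>i. \<exists>\<rho>. devs G i \<pi> \<rho> \<and> (\<forall>h \<in> nodes G. reach G \<rho> h = reach G \<pi> h) \<and> CDT_rational G i \<rho>)"

end

theory Submission
  imports Defs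
begin

text \<open>Without absentmindedness every path meets an infoset \<open>I\<close> at most once, so the expected
  utility is affine in \<open>\<pi>(\<cdot>|I)\<close>: the CDT utility of \<open>\<sigma>\<close> is then the utility of the one-infoset
  deviation to \<open>\<sigma>\<close>, first-visit probability and frequency coincide, and the KKT conditions are
  just optimality of a linear function on a simplex.

  Under perfect recall, player \<open>i\<close>'s own reach probability is constant on each of \<open>i\<close>'s
  infosets, so both the gain of a deviation at \<open>I\<close> and the probability of \<open>I\<close> factor through
  it; what remains are the counterfactual values and the counterfactual reach of \<open>I\<close>. Undoing
  an arbitrary deviation from a fully mixed \<open>\<epsilon>\<close>-rational strategy infoset by infoset, deepest
  first, bounds its gain by \<open>\<epsilon>\<close> times the total counterfactual reach; letting \<open>\<epsilon> \<rightarrow> 0\<close> shows that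
  EDT-rational strategies are optimal, so EDT-Nash equilibria are Nash.

  Conversely, given a Nash equilibrium \<open>\<pi>\<close>, maximise \<open>U\<close> up to \<open>t ^ Suc L\<close> (\<open>L\<close> the depth of
  the tree) over the deviations that play every action with probability at least \<open>t\<close> and follow
  the \<open>t\<close>-perturbation of \<open>\<pi>\<close> at the infosets that \<open>\<pi>\<close> itself reaches. A limit point \<open>\<rho>\<close> of
  these maximisers as \<open>t \<rightarrow> 0\<close> agrees with \<open>\<pi>\<close> wherever \<open>\<pi>\<close> reaches, so it is realization
  equivalent to \<open>\<pi>\<close>, and the maximisers witness its EDT-rationality: at infosets that \<open>\<pi>\<close>
  reaches the counterfactual regret tends to that of \<open>\<rho>\<close>, which vanishes because \<open>\<pi>\<close> is Nash;
  elsewhere near-optimality up to \<open>t ^ Suc L \<le> t \<cdot> (own reach of I)\<close> bounds the normalised gain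
  by a multiple of \<open>t\<close>.\<close>

section \<open>Game trees\<close>

lemma node_prefix: assumes "efg G" shows "h @ t \<in> nodes G \<Longrightarrow> h \<in> nodes G"
proof (induction t rule: rev_induct)
  case (snoc x xs)
  then show ?case using assms unfolding efg_def by (metis append_assoc)
qed simp

lemma take_in_nodes: "efg G \<Longrightarrow> h \<in> nodes G \<Longrightarrow> take k h \<in> nodes G"
  by (metis append_take_drop_id node_prefix)

lemma nth_in_acts_take:
  assumes "efg G" "h \<in> nodes G" "k < length h"
  shows "h ! k \<in> acts G (take k h)"
proof -
  have "take k h @ [h ! k] = take (Suc k) h" using assms(3) by (simp add: take_Suc_conv_app_nth)
  then show ?thesis using take_in_nodes[OF assms(1,2)] by (metis acts_def mem_Collect_eq)
qed

lemma acts_take_ne: "efg G \<Longrightarrow> h \<in> nodes G \<Longrightarrow> k < length h \<Longrightarrow> acts G (take k h) \<noteq> {}"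
  using nth_in_acts_take[of G h k] by auto

lemma take_in_pnodes:
  "efg G \<Longrightarrow> h \<in> nodes G \<Longrightarrow> k < length h \<Longrightarrow> who G (take k h) = Some i \<Longrightarrow> take k h \<in> pnodes G i"
  using take_in_nodes[of G h k] acts_take_ne[of G h k] by (simp add: pnodes_def)

lemma leaves_nodes: "z \<in> leaves G \<Longrightarrow> z \<in> nodes G"
  by (simp add: leaves_def)

lemma util_nonneg: "efg G \<Longrightarrow> z \<in> leaves G \<Longrightarrow> 0 \<le> util G i z"
  by (simp add: efg_def)

lemma reach_snoc: "reach G \<tau> (h @ [a]) = reach G \<tau> h * actprob G \<tau> h a"
  unfolding reach_def by (simp add: nth_append)

lemma efg_same_infoset:
  assumes "efg G" "h \<in> inI G I" "h' \<in> inI G I"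
  shows "who G h = who G h'" "acts G h = acts G h'"
proof -
  have "\<forall>h \<in> nodes G. \<forall>h' \<in> nodes G.
        acts G h \<noteq> {} \<and> who G h \<noteq> None \<and> acts G h' \<noteq> {} \<and> who G h' \<noteq> None \<and>
        info G h = info G h' \<longrightarrow> who G h = who G h' \<and> acts G h = acts G h'"
    using assms(1) unfolding efg_def by blast
  moreover have "h \<in> nodes G" "acts G h \<noteq> {}" "who G h \<noteq> None" "info G h = I"
    "h' \<in> nodes G" "acts G h' \<noteq> {}" "who G h' \<noteq> None" "info G h' = I"
    using assms(2,3) by (simp_all add: inI_def)
  ultimately show "who G h = who G h'" "acts G h = acts G h'" by metis+
qed

lemma inI_who: assumes "efg G" "I \<in> infosets G i" "h \<in> inI G I" shows "who G h = Some i"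
proof -
  obtain h' where "h' \<in> pnodes G i" "info G h' = I" using assms(2) by (auto simp: infosets_def)
  then have "h' \<in> inI G I" "who G h' = Some i" by (auto simp: pnodes_def inI_def)
  then show ?thesis using efg_same_infoset[OF assms(1,3)] by simp
qed

lemma pnodes_inI:
  assumes "h \<in> pnodes G i" shows "h \<in> inI G (info G h)" "info G h \<in> infosets G i"
  using assms by (auto simp: pnodes_def inI_def infosets_def)

lemma inI_pnodes: "efg G \<Longrightarrow> I \<in> infosets G i \<Longrightarrow> h \<in> inI G I \<Longrightarrow> h \<in> pnodes G i"
  using inI_who[of G I i h] by (auto simp: inI_def pnodes_def)

lemma infoset_nonempty: "I \<in> infosets G i \<Longrightarrow> \<exists>h. h \<in> inI G I"
  using pnodes_inI by (fastforce simp: infosets_def)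

lemma some_in_inI: "h \<in> inI G I \<Longrightarrow> (SOME h. h \<in> inI G I) \<in> inI G I"
  by (rule someI)

lemma some_in_infoset: "I \<in> infosets G i \<Longrightarrow> (SOME h. h \<in> inI G I) \<in> inI G I"
  using infoset_nonempty some_in_inI by metis

lemma inI_nodes: "h \<in> inI G I \<Longrightarrow> h \<in> nodes G"
  by (simp add: inI_def)

lemma iacts_eq_acts: assumes "efg G" "h \<in> inI G I" shows "iacts G I = acts G h"
  unfolding iacts_def using efg_same_infoset(2)[OF assms(1) some_in_inI assms(2)] assms(2) .

lemma iacts_ne: assumes "efg G" "I \<in> infosets G i" shows "iacts G I \<noteq> {}"
  using infoset_nonempty[OF assms(2)] iacts_eq_acts[OF assms(1)] by (auto simp: inI_def)

lemma infoset_of_other_player: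
  assumes "efg G" "g \<in> nodes G" "acts G g \<noteq> {}" "who G g = Some j" "j \<noteq> i"
  shows "info G g \<notin> infosets G i"
  using assms inI_who[of G "info G g" i g] by (auto simp: inI_def)

lemma finite_inI: "efg G \<Longrightarrow> finite (inI G I)"
  by (auto simp: efg_def inI_def)

lemma finite_leaves: "efg G \<Longrightarrow> finite (leaves G)"
  by (auto simp: efg_def leaves_def)

lemma finite_acts: assumes "efg G" shows "finite (acts G h)"
proof -
  have "acts G h \<subseteq> last ` nodes G"
  proof
    fix a assume "a \<in> acts G h"
    then show "a \<in> last ` nodes G" by (intro rev_image_eqI[of "h @ [a]"]) (auto simp: acts_def)
  qed
  then show ?thesis using assms finite_surj unfolding efg_def by blast
qed

lemma finite_iacts: "efg G \<Longrightarrow> finite (iacts G I)"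
  by (simp add: iacts_def finite_acts)

lemma finite_infosets: "efg G \<Longrightarrow> finite (infosets G i)"
  unfolding infosets_def pnodes_def efg_def by simp

section \<open>Behavioural strategies and reach probabilities\<close>

lemma behav_bounds:
  assumes "efg G" "behav G I \<sigma>" "a \<in> iacts G I" shows "0 \<le> \<sigma> a" "\<sigma> a \<le> 1"
proof -
  show "0 \<le> \<sigma> a" using assms by (auto simp: behav_def)
  have "\<sigma> a \<le> sum \<sigma> (iacts G I)"
    using assms finite_iacts by (intro member_le_sum) (auto simp: behav_def)
  then show "\<sigma> a \<le> 1" using assms by (auto simp: behav_def)
qed

lemma profile_behav: "profile G \<pi> \<Longrightarrow> I \<in> infosets G i \<Longrightarrow> behav G I (\<pi> I)"
  by (auto simp: profile_def all_infosets_def)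

lemma profile_update: "profile G \<tau> \<Longrightarrow> behav G I \<sigma> \<Longrightarrow> profile G (\<tau>(I := \<sigma>))"
  by (simp add: profile_def)

lemma devs_update:
  "devs G i \<pi> \<tau> \<Longrightarrow> I \<in> infosets G i \<Longrightarrow> behav G I \<sigma> \<Longrightarrow> devs G i \<pi> (\<tau>(I := \<sigma>))"
  by (auto simp: devs_def profile_update)

lemma behav_pure:
  assumes "efg G" "a \<in> iacts G I" shows "behav G I (\<lambda>b. if b = a then 1 else 0)"
  using assms finite_iacts[OF assms(1)] by (auto simp: behav_def)

lemma actprob_bounds:
  assumes "efg G" "profile G \<tau>" "g \<in> nodes G" "a \<in> acts G g"
  shows "0 \<le> actprob G \<tau> g a" "actprob G \<tau> g a \<le> 1"
proof -
  have "0 \<le> actprob G \<tau> g a \<and> actprob G \<tau> g a \<le> 1"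
  proof (cases "who G g")
    case None
    then have c: "\<forall>a \<in> acts G g. 0 \<le> chance G g a" "sum (chance G g) (acts G g) = 1"
      using assms unfolding efg_def by auto
    moreover have "chance G g a \<le> sum (chance G g) (acts G g)"
      using c assms finite_acts by (intro member_le_sum) auto
    ultimately show ?thesis using None assms(4) by (simp add: actprob_def)
  next
    case (Some j)
    then have "g \<in> pnodes G j" using assms by (auto simp: pnodes_def)
    then have "g \<in> inI G (info G g)" "info G g \<in> infosets G j"
      by (simp_all add: pnodes_inI)
    then have "behav G (info G g) (\<tau> (info G g))" "a \<in> iacts G (info G g)"
      using profile_behav[OF assms(2)] iacts_eq_acts[OF assms(1)] assms(4) by auto
    then show ?thesis using behav_bounds[OF assms(1)] Some by (simp add: actprob_def)
  qed
  then show "0 \<le> actprob G \<tau> g a" "actprob G \<tau> g a \<le> 1" by auto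
qed

lemma prod_actprob_bounds:
  assumes "efg G" "profile G \<tau>" "h \<in> nodes G" "K \<subseteq> {..<length h}"
  shows "0 \<le> (\<Prod>k\<in>K. actprob G \<tau> (take k h) (h ! k))"
    "(\<Prod>k\<in>K. actprob G \<tau> (take k h) (h ! k)) \<le> 1"
  using actprob_bounds[OF assms(1,2) take_in_nodes[OF assms(1,3)] nth_in_acts_take[OF assms(1,3)]]
    assms(4) by (auto intro!: prod_nonneg prod_le_1)

lemma reach_bounds:
  assumes "efg G" "profile G \<tau>" "h \<in> nodes G" shows "0 \<le> reach G \<tau> h" "reach G \<tau> h \<le> 1"
  using prod_actprob_bounds[OF assms, of "{..<length h}"] by (auto simp: reach_def)

lemma U_le_total_util:
  assumes "efg G" "profile G \<tau>" shows "U G i \<tau> \<le> (\<Sum>z \<in> leaves G. util G i z)"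
  unfolding U_def using reach_bounds[OF assms leaves_nodes] util_nonneg[OF assms(1)]
  by (intro sum_mono mult_left_le_one_le) auto

lemma U_eq_if_reach_eq: "\<forall>h \<in> nodes G. reach G \<rho> h = reach G \<pi> h \<Longrightarrow> U G i \<rho> = U G i \<pi>"
  unfolding U_def by (intro sum.cong) (auto simp: leaves_def)

lemma actprob_update:
  "actprob G (\<tau>(I := \<sigma>)) g a = (if who G g \<noteq> None \<and> info G g = I then \<sigma> a else actprob G \<tau> g a)"
  by (cases "who G g") (auto simp: actprob_def)

lemma actprob_update_take:
  assumes "efg G" "z \<in> nodes G" "k < length z" "take k z \<notin> inI G I"
  shows "actprob G (\<tau>(I := \<sigma>)) (take k z) (z ! k) = actprob G \<tau> (take k z) (z ! k)"
  using assms take_in_nodes[OF assms(1,2)] acts_take_ne[OF assms(1-3)]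
  by (auto simp: actprob_update inI_def)

lemma actprob_tendsto:
  "(\<And>I a. (\<lambda>k. f k I a) \<longlonglongrightarrow> g I a) \<Longrightarrow> (\<lambda>k. actprob G (f k) h a) \<longlonglongrightarrow> actprob G g h a"
  by (cases "who G h") (simp_all add: actprob_def)

lemma U_tendsto:
  "(\<And>I a. (\<lambda>k. f k I a) \<longlonglongrightarrow> g I a) \<Longrightarrow> (\<lambda>k. U G i (f k)) \<longlonglongrightarrow> U G i g"
  unfolding U_def reach_def by (intro tendsto_sum tendsto_mult_right tendsto_prod actprob_tendsto)

section \<open>Games without absentmindedness\<close>

lemma path_infosets_eq:
  "path_infosets G h =
     map (\<lambda>k. info G (take k h)) (filter (\<lambda>k. who G (take k h) \<noteq> None) [0..<length h])"
  unfolding path_infosets_def obs_def by (simp add: filter_map o_def)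

lemma not_absentminded_visit_unique:
  assumes "\<not> absentminded G" "z \<in> nodes G" "k1 < length z" "k2 < length z"
    "take k1 z \<in> inI G I" "take k2 z \<in> inI G I"
  shows "k1 = k2"
proof -
  let ?K = "set (filter (\<lambda>k. who G (take k z) \<noteq> None) [0..<length z])"
  have "distinct (path_infosets G z)" using assms(1,2) by (auto simp: absentminded_def)
  then have "inj_on (\<lambda>k. info G (take k z)) ?K" by (simp add: path_infosets_eq distinct_map)
  moreover have "k1 \<in> ?K" "k2 \<in> ?K" using assms(3-6) by (auto simp: inI_def)
  moreover have "info G (take k1 z) = info G (take k2 z)" using assms(5,6) by (simp add: inI_def)
  ultimately show "k1 = k2" by (meson inj_onD)
qed

lemma absentmindedE:
  assumes "efg G" "absentminded G"
  obtains z k1 k2 I where "z \<in> nodes G" "k1 < k2" "k2 < length z"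
    "take k1 z \<in> inI G I" "take k2 z \<in> inI G I"
proof -
  obtain z where z: "z \<in> nodes G" "\<not> distinct (path_infosets G z)"
    using assms(2) by (auto simp: absentminded_def)
  let ?K = "set (filter (\<lambda>k. who G (take k z) \<noteq> None) [0..<length z])"
  have "\<not> inj_on (\<lambda>k. info G (take k z)) ?K" using z(2) by (simp add: path_infosets_eq distinct_map)
  then obtain k1 k2 where k: "k1 \<in> ?K" "k2 \<in> ?K" "k1 < k2" "info G (take k1 z) = info G (take k2 z)"
    unfolding inj_on_def by (metis linorder_neqE_nat)
  have "take k z \<in> inI G (info G (take k2 z))" if "k \<in> ?K" "info G (take k z) = info G (take k2 z)" for k
    using that take_in_nodes[OF assms(1) z(1)] acts_take_ne[OF assms(1) z(1)] by (auto simp: inI_def)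
  then have "take k1 z \<in> inI G (info G (take k2 z))" "take k2 z \<in> inI G (info G (take k2 z))"
    using k by blast+
  moreover have "k2 < length z" using k(2) by simp
  ultimately show thesis using that z(1) k(3) by blast
qed

definition visits :: "('a, 'p, 'i) game \<Rightarrow> 'i \<Rightarrow> 'a list \<Rightarrow> bool" where
  "visits G I z \<longleftrightarrow> (\<exists>k < length z. take k z \<in> inI G I)"

definition visit_index :: "('a, 'p, 'i) game \<Rightarrow> 'i \<Rightarrow> 'a list \<Rightarrow> nat" where
  "visit_index G I z = (THE k. k < length z \<and> take k z \<in> inI G I)"

lemma visit_index:
  assumes "\<not> absentminded G" "z \<in> nodes G" "visits G I z"
  shows "visit_index G I z < length z" "take (visit_index G I z) z \<in> inI G I"
    "\<And>k. k < length z \<Longrightarrow> take k z \<in> inI G I \<Longrightarrow> k = visit_index G I z"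
proof -
  obtain k where k: "k < length z" "take k z \<in> inI G I" using assms(3) by (auto simp: visits_def)
  have unique: "k' = k" if "k' < length z" "take k' z \<in> inI G I" for k'
    using not_absentminded_visit_unique[OF assms(1,2) that(1) k(1) that(2) k(2)] .
  have "visit_index G I z = k"
    unfolding visit_index_def using k unique by (intro the_equality) blast+
  then show "visit_index G I z < length z" "take (visit_index G I z) z \<in> inI G I"
    "\<And>k. k < length z \<Longrightarrow> take k z \<in> inI G I \<Longrightarrow> k = visit_index G I z"
    using k unique by metis+
qed

lemma first_visit_eq_inI:
  assumes "efg G" "\<not> absentminded G" shows "first_visit G I = inI G I"
proof -
  have "I \<notin> set (path_infosets G h)" if h: "h \<in> inI G I" for h
  proof
    assume "I \<in> set (path_infosets G h)"
    then obtain k where k: "k < length h" "who G (take k h) \<noteq> None" "info G (take k h) = I"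
      by (auto simp: path_infosets_eq)
    obtain a where a: "h @ [a] \<in> nodes G" using h by (auto simp: inI_def acts_def)
    have hn: "h \<in> nodes G" using h by (simp add: inI_def)
    have "take k (h @ [a]) \<in> inI G I"
      using k take_in_nodes[OF assms(1) hn] acts_take_ne[OF assms(1) hn k(1)] by (simp add: inI_def)
    moreover have "take (length h) (h @ [a]) \<in> inI G I" using h by simp
    ultimately show False
      using not_absentminded_visit_unique[OF assms(2) a, of k "length h"] k(1) by simp
  qed
  then show ?thesis by (auto simp: first_visit_def)
qed

lemma PI_eq_Fr: "efg G \<Longrightarrow> \<not> absentminded G \<Longrightarrow> PI G \<tau> I = Fr G \<tau> I"
  by (simp add: PI_def Fr_def first_visit_eq_inI)

definition reach_except :: "('a, 'p, 'i) game \<Rightarrow> ('i, 'a) profile \<Rightarrow> 'i \<Rightarrow> 'a list \<Rightarrow> real" where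
  "reach_except G \<tau> I z =
     (\<Prod>k \<in> {..<length z} - {visit_index G I z}. actprob G \<tau> (take k z) (z ! k))"

definition U_avoiding :: "('a, 'p, 'i) game \<Rightarrow> 'p \<Rightarrow> ('i, 'a) profile \<Rightarrow> 'i \<Rightarrow> real" where
  "U_avoiding G i \<tau> I = (\<Sum>z \<in> {z \<in> leaves G. \<not> visits G I z}. reach G \<tau> z * util G i z)"

definition U_coeff :: "('a, 'p, 'i) game \<Rightarrow> 'p \<Rightarrow> ('i, 'a) profile \<Rightarrow> 'i \<Rightarrow> 'a \<Rightarrow> real" where
  "U_coeff G i \<tau> I a =
     (\<Sum>z \<in> {z \<in> leaves G. visits G I z \<and> z ! visit_index G I z = a}. reach_except G \<tau> I z * util G i z)"

lemma reach_update_visits: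
  assumes "efg G" "\<not> absentminded G" "z \<in> nodes G" "visits G I z"
  shows "reach G (\<tau>(I := \<sigma>)) z = \<sigma> (z ! visit_index G I z) * reach_except G \<tau> I z"
proof -
  note V = visit_index[OF assms(2-4)]
  let ?k = "visit_index G I z"
  have "reach G (\<tau>(I := \<sigma>)) z = actprob G (\<tau>(I := \<sigma>)) (take ?k z) (z ! ?k) *
      (\<Prod>k \<in> {..<length z} - {?k}. actprob G (\<tau>(I := \<sigma>)) (take k z) (z ! k))"
    unfolding reach_def using V(1) by (intro prod.remove) simp_all
  also have "actprob G (\<tau>(I := \<sigma>)) (take ?k z) (z ! ?k) = \<sigma> (z ! ?k)"
    using V(2) by (simp add: actprob_update inI_def)
  also have "(\<Prod>k \<in> {..<length z} - {?k}. actprob G (\<tau>(I := \<sigma>)) (take k z) (z ! k)) =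
      reach_except G \<tau> I z"
    unfolding reach_except_def
  proof (intro prod.cong refl)
    fix k assume "k \<in> {..<length z} - {?k}"
    then show "actprob G (\<tau>(I := \<sigma>)) (take k z) (z ! k) = actprob G \<tau> (take k z) (z ! k)"
      using V(3) actprob_update_take[OF assms(1,3)] by blast
  qed
  finally show ?thesis .
qed

lemma reach_update_not_visits:
  assumes "efg G" "z \<in> nodes G" "\<not> visits G I z"
  shows "reach G (\<tau>(I := \<sigma>)) z = reach G \<tau> z"
  unfolding reach_def using assms actprob_update_take[OF assms(1,2)]
  by (intro prod.cong) (auto simp: visits_def)

lemma visit_action_in_iacts:
  assumes "efg G" "\<not> absentminded G" "z \<in> nodes G" "visits G I z"
  shows "z ! visit_index G I z \<in> iacts G I"
  using visit_index(1,2)[OF assms(2-4)] nth_in_acts_take[OF assms(1,3)] iacts_eq_acts[OF assms(1)] by simp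

lemma U_update:
  assumes "efg G" "\<not> absentminded G"
  shows "U G i (\<tau>(I := \<sigma>)) = U_avoiding G i \<tau> I + (\<Sum>a \<in> iacts G I. \<sigma> a * U_coeff G i \<tau> I a)"
proof -
  let ?L = "leaves G" and ?\<tau> = "\<tau>(I := \<sigma>)"
  have fin: "finite ?L" using finite_leaves[OF assms(1)] .
  have "U G i ?\<tau> = (\<Sum>z \<in> {z \<in> ?L. \<not> visits G I z}. reach G ?\<tau> z * util G i z)
      + (\<Sum>z \<in> {z \<in> ?L. visits G I z}. reach G ?\<tau> z * util G i z)"
    unfolding U_def using fin by (subst sum.union_disjoint[symmetric]) (auto intro: sum.cong)
  also have "(\<Sum>z \<in> {z \<in> ?L. \<not> visits G I z}. reach G ?\<tau> z * util G i z) = U_avoiding G i \<tau> I"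
    unfolding U_avoiding_def using reach_update_not_visits[OF assms(1) leaves_nodes]
    by (intro sum.cong) auto
  also have "(\<Sum>z \<in> {z \<in> ?L. visits G I z}. reach G ?\<tau> z * util G i z)
     = (\<Sum>z \<in> {z \<in> ?L. visits G I z}. \<sigma> (z ! visit_index G I z) * (reach_except G \<tau> I z * util G i z))"
    using reach_update_visits[OF assms leaves_nodes] by (intro sum.cong) auto
  also have "\<dots> = (\<Sum>a \<in> iacts G I. \<Sum>z \<in> {z \<in> {z \<in> ?L. visits G I z}. z ! visit_index G I z = a}.
      \<sigma> (z ! visit_index G I z) * (reach_except G \<tau> I z * util G i z))"
    using fin finite_iacts[OF assms(1)] visit_action_in_iacts[OF assms leaves_nodes]
    by (intro sum.group[symmetric]) auto
  also have "\<dots> = (\<Sum>a \<in> iacts G I. \<sigma> a * U_coeff G i \<tau> I a)"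
    unfolding U_coeff_def sum_distrib_left by (intro sum.cong refl) auto
  finally show ?thesis .
qed

lemma U_update_diff:
  assumes "efg G" "\<not> absentminded G"
  shows "U G i (\<tau>(I := \<sigma>)) - U G i \<tau> = (\<Sum>a \<in> iacts G I. (\<sigma> a - \<tau> I a) * U_coeff G i \<tau> I a)"
  using U_update[OF assms, of i \<tau> I \<sigma>] U_update[OF assms, of i \<tau> I "\<tau> I"]
  by (simp add: sum_subtractf left_diff_distrib)

lemma dU_eq_U_coeff:
  assumes "efg G" "\<not> absentminded G" "a \<in> iacts G I"
  shows "dU G i \<tau> I a = U_coeff G i \<tau> I a"
proof -
  define C where "C = U_avoiding G i \<tau> I + (\<Sum>b \<in> iacts G I - {a}. \<tau> I b * U_coeff G i \<tau> I b)"
  have "U G i (\<tau>(I := (\<tau> I)(a := t))) = C + t * U_coeff G i \<tau> I a" for t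
  proof -
    have "(\<Sum>b \<in> iacts G I - {a}. ((\<tau> I)(a := t)) b * U_coeff G i \<tau> I b) =
        (\<Sum>b \<in> iacts G I - {a}. \<tau> I b * U_coeff G i \<tau> I b)"
      by (intro sum.cong) auto
    then show ?thesis unfolding U_update[OF assms(1,2)] C_def
      using assms(3) finite_iacts[OF assms(1)] by (simp add: sum.remove[of _ a])
  qed
  moreover have "((\<lambda>t. C + t * U_coeff G i \<tau> I a) has_real_derivative U_coeff G i \<tau> I a) (at x)" for x
    by (auto intro!: derivative_eq_intros)
  ultimately show ?thesis unfolding dU_def by (simp add: DERIV_imp_deriv)
qed

lemma UCDT_eq_U_update:
  assumes "efg G" "\<not> absentminded G"
  shows "UCDT G i \<tau> I \<sigma> = U G i (\<tau>(I := \<sigma>))"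
  using U_update_diff[OF assms, of i \<tau> I \<sigma>] dU_eq_U_coeff[OF assms]
  by (simp add: UCDT_def cong: sum.cong)

lemma KKT_imp_simplex_linear_max:
  fixes c p \<sigma> :: "'a \<Rightarrow> real"
  assumes KKT: "\<forall>a\<in>A. c a + \<mu> a = l \<and> 0 \<le> \<mu> a \<and> \<mu> a * p a = 0"
    and "\<forall>a\<in>A. 0 \<le> \<sigma> a" "sum \<sigma> A = 1" "sum p A = 1"
  shows "(\<Sum>a\<in>A. (\<sigma> a - p a) * c a) \<le> 0"
proof -
  have "(\<Sum>a\<in>A. (\<sigma> a - p a) * c a) = (\<Sum>a\<in>A. (\<sigma> a - p a) * l - \<sigma> a * \<mu> a)"
  proof (rule sum.cong[OF refl])
    fix a assume "a \<in> A"
    then have c: "c a = l - \<mu> a" and slack: "\<mu> a * p a = 0" using KKT by auto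
    have "(\<sigma> a - p a) * c a = (\<sigma> a - p a) * l - \<sigma> a * \<mu> a + \<mu> a * p a"
      by (simp add: c algebra_simps)
    then show "(\<sigma> a - p a) * c a = (\<sigma> a - p a) * l - \<sigma> a * \<mu> a" by (simp add: slack)
  qed
  also have "\<dots> = - (\<Sum>a\<in>A. \<sigma> a * \<mu> a)"
    using assms(3,4) by (simp add: sum_subtractf left_diff_distrib sum_distrib_right[symmetric])
  also have "\<dots> \<le> 0" using KKT assms(2) by (simp add: sum_nonneg)
  finally show ?thesis .
qed

lemma simplex_linear_max_imp_KKT:
  fixes c p :: "'a \<Rightarrow> real"
  assumes fin: "finite A" and ne: "A \<noteq> {}" and p: "\<forall>a\<in>A. 0 \<le> p a" "sum p A = 1"
    and opt: "\<And>b. b \<in> A \<Longrightarrow> c b \<le> (\<Sum>a\<in>A. p a * c a)"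
  shows "\<exists>l \<mu>. \<forall>a\<in>A. c a + \<mu> a = l \<and> 0 \<le> \<mu> a \<and> \<mu> a * p a = 0"
proof -
  define l where "l = Max (c ` A)"
  have le_l: "c a \<le> l" if "a \<in> A" for a
    unfolding l_def using fin that by (intro Max_ge) auto
  have "l \<in> c ` A" unfolding l_def using fin ne by (intro Max_in) auto
  then have "l \<le> (\<Sum>a\<in>A. p a * c a)" using opt by auto
  then have "(\<Sum>a\<in>A. p a * (l - c a)) \<le> 0"
    using p(2) by (simp add: right_diff_distrib sum_subtractf sum_distrib_right[symmetric])
  moreover have "\<forall>a\<in>A. 0 \<le> p a * (l - c a)" using p(1) le_l by simp
  ultimately have "\<forall>a\<in>A. p a * (l - c a) = 0"
    using sum_nonneg_eq_0_iff[OF fin] sum_nonneg[of A] by (metis (no_types, lifting) order.antisym)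
  then show ?thesis
    using le_l by (intro exI[of _ l] exI[of _ "\<lambda>a. l - c a"]) (auto simp: mult.commute)
qed

lemma simplex_linear_max_iff_KKT:
  fixes c p :: "'a \<Rightarrow> real"
  assumes fin: "finite A" and ne: "A \<noteq> {}" and p: "\<forall>a\<in>A. 0 \<le> p a" "sum p A = 1"
  shows "(\<forall>\<sigma>. (\<forall>a\<in>A. 0 \<le> \<sigma> a) \<and> sum \<sigma> A = 1 \<and> (\<forall>a. a \<notin> A \<longrightarrow> \<sigma> a = 0) \<longrightarrow>
            (\<Sum>a\<in>A. (\<sigma> a - p a) * c a) \<le> 0)
     \<longleftrightarrow> (\<exists>l \<mu>. \<forall>a\<in>A. c a + \<mu> a = l \<and> 0 \<le> \<mu> a \<and> \<mu> a * p a = 0)"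
proof
  assume opt: "\<forall>\<sigma>. (\<forall>a\<in>A. 0 \<le> \<sigma> a) \<and> sum \<sigma> A = 1 \<and> (\<forall>a. a \<notin> A \<longrightarrow> \<sigma> a = 0) \<longrightarrow>
      (\<Sum>a\<in>A. (\<sigma> a - p a) * c a) \<le> 0"
  have "c b \<le> (\<Sum>a\<in>A. p a * c a)" if b: "b \<in> A" for b
  proof -
    define \<delta> where "\<delta> a = (if a = b then 1 else 0 :: real)" for a
    have "(\<Sum>a\<in>A. \<delta> a * c a) = (\<Sum>a\<in>A. if a = b then c a else 0)"
      by (rule sum.cong) (simp_all add: \<delta>_def)
    then have "(\<Sum>a\<in>A. (\<delta> a - p a) * c a) = c b - (\<Sum>a\<in>A. p a * c a)"
      using b fin by (simp add: left_diff_distrib sum_subtractf)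
    moreover have "(\<Sum>a\<in>A. (\<delta> a - p a) * c a) \<le> 0" using opt b fin by (auto simp: \<delta>_def)
    ultimately show ?thesis by simp
  qed
  then show "\<exists>l \<mu>. \<forall>a\<in>A. c a + \<mu> a = l \<and> 0 \<le> \<mu> a \<and> \<mu> a * p a = 0"
    by (rule simplex_linear_max_imp_KKT[OF assms])
qed (use KKT_imp_simplex_linear_max p(2) in blast)

lemma EDT_optimal_at_iff_KKT:
  assumes "efg G" "\<not> absentminded G" "profile G \<pi>" "I \<in> infosets G i"
  shows "(\<forall>\<sigma>. behav G I \<sigma> \<longrightarrow> U G i (\<pi>(I := \<sigma>)) \<le> U G i \<pi>)
     \<longleftrightarrow> (\<exists>l \<mu>. \<forall>a \<in> iacts G I. dU G i \<pi> I a + \<mu> a = l \<and> 0 \<le> \<mu> a \<and> \<mu> a * \<pi> I a = 0)"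
proof -
  have "U G i (\<pi>(I := \<sigma>)) - U G i \<pi> = (\<Sum>a \<in> iacts G I. (\<sigma> a - \<pi> I a) * dU G i \<pi> I a)"
    for \<sigma>
    using U_update_diff[OF assms(1,2), of i \<pi> I \<sigma>] dU_eq_U_coeff[OF assms(1,2)]
    by (simp cong: sum.cong)
  then have "U G i (\<pi>(I := \<sigma>)) \<le> U G i \<pi> \<longleftrightarrow> (\<Sum>a \<in> iacts G I. (\<sigma> a - \<pi> I a) * dU G i \<pi> I a) \<le> 0"
    for \<sigma>
    by (metis diff_le_0_iff_le)
  then show ?thesis
    using simplex_linear_max_iff_KKT[OF finite_iacts[OF assms(1)] iacts_ne[OF assms(1,4)]]
      profile_behav[OF assms(3,4)]
    by (simp add: behav_def)
qed

lemma EDT_eq_iff_CDT_eq: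
  assumes "efg G" "\<not> absentminded G"
  shows "EDT_eq G \<pi> \<longleftrightarrow> CDT_eq G \<pi>"
proof (cases "profile G \<pi>")
  case True
  let ?KKT = "\<lambda>i I l \<mu>. \<forall>a \<in> iacts G I. dU G i \<pi> I a + \<mu> a = l \<and> 0 \<le> \<mu> a \<and> \<mu> a * \<pi> I a = 0"
  have "EDT_eq G \<pi> \<longleftrightarrow>
      (\<forall>i. \<forall>I \<in> infosets G i. \<forall>\<sigma>. behav G I \<sigma> \<longrightarrow> U G i (\<pi>(I := \<sigma>)) \<le> U G i \<pi>)"
    using True by (simp add: EDT_eq_def)
  also have "\<dots> \<longleftrightarrow> (\<forall>i. \<forall>I \<in> infosets G i. \<exists>l \<mu>. ?KKT i I l \<mu>)"
    using EDT_optimal_at_iff_KKT[OF assms True] by (intro all_cong1 ball_cong[OF refl])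
  also have "\<dots> \<longleftrightarrow> (\<forall>i. \<exists>L M. \<forall>I \<in> infosets G i. ?KKT i I (L I) (M I))"
  proof (intro all_cong1 iffI)
    fix i assume "\<forall>I \<in> infosets G i. \<exists>l \<mu>. ?KKT i I l \<mu>"
    from bchoice[OF this] obtain L where "\<forall>I \<in> infosets G i. \<exists>\<mu>. ?KKT i I (L I) \<mu>" ..
    from bchoice[OF this] obtain M where "\<forall>I \<in> infosets G i. ?KKT i I (L I) (M I)" ..
    then show "\<exists>L M. \<forall>I \<in> infosets G i. ?KKT i I (L I) (M I)" by blast
  qed blast
  also have "\<dots> \<longleftrightarrow> CDT_eq G \<pi>"
    using True by (simp add: CDT_eq_def)
  finally show ?thesis .
qed (simp add: EDT_eq_def CDT_eq_def)

lemma EDT_rational_iff_CDT_rational: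
  "efg G \<Longrightarrow> \<not> absentminded G \<Longrightarrow> EDT_rational G i \<rho> \<longleftrightarrow> CDT_rational G i \<rho>"
  unfolding EDT_rational_def CDT_rational_def by (simp add: PI_eq_Fr UCDT_eq_U_update)

lemma EDT_Nash_iff_CDT_Nash:
  "efg G \<Longrightarrow> \<not> absentminded G \<Longrightarrow> EDT_Nash G \<pi> \<longleftrightarrow> CDT_Nash G \<pi>"
  unfolding EDT_Nash_def CDT_Nash_def by (simp add: EDT_eq_iff_CDT_eq EDT_rational_iff_CDT_rational)

section \<open>Perfect recall\<close>

lemma obs_take: "m \<le> length z \<Longrightarrow> obs G (take m z) = take m (obs G z)"
  unfolding obs_def by (simp add: take_map min_absorb1 cong: map_cong)

lemma obs_i_length_less:
  fixes G :: "('a, 'p, 'i) game"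
  assumes "k1 < k2" "k2 \<le> length z" "who G (take k1 z) = Some i"
  shows "length (obs_i G i (take k1 z)) < length (obs_i G i (take k2 z))"
proof -
  define xs where "xs = obs G z"
  define P where "P = (\<lambda>x::('p option \<times> 'i \<times> 'a). fst x = Some i)"
  have obs_i_eq: "obs_i G i h = filter P (obs G h)" for h
    unfolding obs_i_def P_def by (rule filter_cong) auto
  have len: "length xs = length z" by (simp add: obs_def xs_def)
  have "take k2 xs = take (Suc k1) xs @ drop (Suc k1) (take k2 xs)"
    using assms(1) by (metis append_take_drop_id min_absorb1 Suc_leI take_take)
  also have "take (Suc k1) xs = take k1 xs @ [xs ! k1]"
    using assms(1,2) len by (simp add: take_Suc_conv_app_nth)
  finally have split: "take k2 xs = take k1 xs @ [xs ! k1] @ drop (Suc k1) (take k2 xs)" by simp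
  have "P (xs ! k1)" using assms by (simp add: P_def obs_def xs_def)
  then have "length (filter P (take k1 xs)) < length (filter P (take k2 xs))"
    by (subst split) simp
  then show ?thesis using assms(1,2) by (simp add: obs_i_eq obs_take xs_def)
qed

lemma perfect_recall_not_absentminded:
  assumes "efg G" "perfect_recall G" shows "\<not> absentminded G"
proof
  assume "absentminded G"
  then obtain z k1 k2 I where z: "z \<in> nodes G" "k1 < k2" "k2 < length z"
    and in_I: "take k1 z \<in> inI G I" "take k2 z \<in> inI G I"
    using absentmindedE[OF assms(1)] by metis
  obtain j where j: "who G (take k1 z) = Some j" using in_I(1) by (auto simp: inI_def)
  have "who G (take k2 z) = Some j" using efg_same_infoset(1)[OF assms(1) in_I(2,1)] j by simp
  then have "take k1 z \<in> pnodes G j" "take k2 z \<in> pnodes G j"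
    using j in_I by (auto simp: inI_def pnodes_def)
  moreover have "info G (take k1 z) = info G (take k2 z)" using in_I by (simp add: inI_def)
  ultimately have "obs_i G j (take k1 z) = obs_i G j (take k2 z)"
    using assms(2) unfolding perfect_recall_def by blast
  then show False using obs_i_length_less[OF z(2) _ j] z(3) by simp
qed

definition own_reach :: "('a, 'p, 'i) game \<Rightarrow> 'p \<Rightarrow> ('i, 'a) profile \<Rightarrow> 'a list \<Rightarrow> real" where
  "own_reach G i \<tau> h =
     (\<Prod>k \<in> {k. k < length h \<and> who G (take k h) = Some i}. actprob G \<tau> (take k h) (h ! k))"

definition others_reach :: "('a, 'p, 'i) game \<Rightarrow> 'p \<Rightarrow> ('i, 'a) profile \<Rightarrow> 'a list \<Rightarrow> real" where
  "others_reach G i \<tau> h =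
     (\<Prod>k \<in> {k. k < length h \<and> who G (take k h) \<noteq> Some i}. actprob G \<tau> (take k h) (h ! k))"

lemma reach_eq_own_others: "reach G \<tau> h = own_reach G i \<tau> h * others_reach G i \<tau> h"
proof -
  have "{..<length h} = {k. k < length h \<and> who G (take k h) = Some i} \<union>
      {k. k < length h \<and> who G (take k h) \<noteq> Some i}"
    by auto
  then show ?thesis unfolding reach_def own_reach_def others_reach_def
    by (simp add: prod.union_disjoint[symmetric] disjoint_iff)
qed

lemma own_reach_eq_obs_i:
  "own_reach G i \<tau> h = prod_list (map (\<lambda>(_, J, a). \<tau> J a) (obs_i G i h))"
proof -
  let ?Q = "\<lambda>k. who G (take k h) = Some i"
  have "obs_i G i h = map (\<lambda>k. (who G (take k h), info G (take k h), h ! k)) (filter ?Q [0..<length h])"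
    unfolding obs_i_def obs_def by (simp add: filter_map o_def)
  then have "prod_list (map (\<lambda>(_, J, a). \<tau> J a) (obs_i G i h)) =
      prod_list (map (\<lambda>k. \<tau> (info G (take k h)) (h ! k)) (filter ?Q [0..<length h]))"
    by (simp add: o_def)
  also have "\<dots> = (\<Prod>k \<in> set (filter ?Q [0..<length h]). \<tau> (info G (take k h)) (h ! k))"
    by (rule prod.distinct_set_conv_list[symmetric]) simp
  also have "\<dots> = own_reach G i \<tau> h"
    unfolding own_reach_def by (rule prod.cong) (auto simp: actprob_def)
  finally show ?thesis by simp
qed

definition own_reach_at :: "('a, 'p, 'i) game \<Rightarrow> 'p \<Rightarrow> ('i, 'a) profile \<Rightarrow> 'i \<Rightarrow> real" where
  "own_reach_at G i \<tau> I = own_reach G i \<tau> (SOME h. h \<in> inI G I)"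

definition own_depth :: "('a, 'p, 'i) game \<Rightarrow> 'p \<Rightarrow> 'i \<Rightarrow> nat" where
  "own_depth G i I = length (obs_i G i (SOME h. h \<in> inI G I))"

lemma perfect_recall_obs_i_eq:
  assumes "efg G" "perfect_recall G" "I \<in> infosets G i" "h \<in> inI G I"
  shows "obs_i G i h = obs_i G i (SOME h. h \<in> inI G I)"
proof -
  have s: "(SOME h. h \<in> inI G I) \<in> inI G I" using some_in_inI[OF assms(4)] .
  then have "info G h = info G (SOME h. h \<in> inI G I)" using assms(4) by (simp add: inI_def)
  then show ?thesis
    using assms(2) inI_pnodes[OF assms(1,3,4)] inI_pnodes[OF assms(1,3) s]
    unfolding perfect_recall_def by blast
qed

lemma own_reach_infoset:
  "efg G \<Longrightarrow> perfect_recall G \<Longrightarrow> I \<in> infosets G i \<Longrightarrow> h \<in> inI G I \<Longrightarrow>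
    own_reach G i \<tau> h = own_reach_at G i \<tau> I"
  by (simp add: own_reach_at_def own_reach_eq_obs_i perfect_recall_obs_i_eq)

lemma own_depth_infoset:
  "efg G \<Longrightarrow> perfect_recall G \<Longrightarrow> I \<in> infosets G i \<Longrightarrow> h \<in> inI G I \<Longrightarrow>
    length (obs_i G i h) = own_depth G i I"
  by (simp add: own_depth_def perfect_recall_obs_i_eq)

lemma own_depth_less:
  assumes "efg G" "perfect_recall G" "z \<in> nodes G" "visits G I z" "I \<in> infosets G i"
    "visit_index G I z < k" "k < length z" "who G (take k z) = Some i"
  shows "own_depth G i I < own_depth G i (info G (take k z))"
proof -
  note V = visit_index(1,2)[OF perfect_recall_not_absentminded[OF assms(1,2)] assms(3,4)]
  have "take k z \<in> pnodes G i" using take_in_pnodes[OF assms(1,3,7,8)] .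
  note k = pnodes_inI(2,1)[OF this]
  have "length (obs_i G i (take (visit_index G I z) z)) < length (obs_i G i (take k z))"
    using obs_i_length_less[OF assms(6) _ inI_who[OF assms(1,5) V(2)]] assms(7) by simp
  then show ?thesis
    using own_depth_infoset[OF assms(1,2,5) V(2)] own_depth_infoset[OF assms(1,2) k] by simp
qed

definition reach_after :: "('a, 'p, 'i) game \<Rightarrow> ('i, 'a) profile \<Rightarrow> 'i \<Rightarrow> 'a list \<Rightarrow> real" where
  "reach_after G \<tau> I z = (\<Prod>k \<in> {visit_index G I z<..<length z}. actprob G \<tau> (take k z) (z ! k))"

definition cf_value :: "('a, 'p, 'i) game \<Rightarrow> 'p \<Rightarrow> ('i, 'a) profile \<Rightarrow> 'i \<Rightarrow> 'a \<Rightarrow> real" where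
  "cf_value G i \<tau> I a =
     (\<Sum>z \<in> {z \<in> leaves G. visits G I z \<and> z ! visit_index G I z = a}.
        others_reach G i \<tau> (take (visit_index G I z) z) * reach_after G \<tau> I z * util G i z)"

definition cf_reach :: "('a, 'p, 'i) game \<Rightarrow> 'p \<Rightarrow> ('i, 'a) profile \<Rightarrow> 'i \<Rightarrow> real" where
  "cf_reach G i \<tau> I = (\<Sum>h \<in> inI G I. others_reach G i \<tau> h)"

lemma reach_except_eq:
  assumes "\<not> absentminded G" "z \<in> nodes G" "visits G I z"
  shows "reach_except G \<tau> I z = reach G \<tau> (take (visit_index G I z) z) * reach_after G \<tau> I z"
proof -
  let ?k = "visit_index G I z"
  have k: "?k < length z" using visit_index(1)[OF assms] .
  have "{..<length z} - {?k} = {..<?k} \<union> {?k<..<length z}" using k by auto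
  then have "reach_except G \<tau> I z =
      (\<Prod>k \<in> {..<?k} \<union> {?k<..<length z}. actprob G \<tau> (take k z) (z ! k))"
    unfolding reach_except_def by simp
  also have "\<dots> = (\<Prod>k \<in> {..<?k}. actprob G \<tau> (take k z) (z ! k)) * reach_after G \<tau> I z"
    unfolding reach_after_def by (rule prod.union_disjoint) auto
  finally have "reach_except G \<tau> I z =
      (\<Prod>k \<in> {..<?k}. actprob G \<tau> (take k z) (z ! k)) * reach_after G \<tau> I z" .
  moreover have "(\<Prod>k \<in> {..<?k}. actprob G \<tau> (take k z) (z ! k)) = reach G \<tau> (take ?k z)"
    unfolding reach_def using k by (intro prod.cong) (auto simp: min_absorb1 min_absorb2)
  ultimately show ?thesis by simp
qed

lemma U_coeff_eq_cf_value:
  assumes "efg G" "perfect_recall G" "I \<in> infosets G i"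
  shows "U_coeff G i \<tau> I a = own_reach_at G i \<tau> I * cf_value G i \<tau> I a"
  unfolding U_coeff_def cf_value_def sum_distrib_left
proof (rule sum.cong[OF refl])
  have na: "\<not> absentminded G" using perfect_recall_not_absentminded[OF assms(1,2)] .
  fix z assume "z \<in> {z \<in> leaves G. visits G I z \<and> z ! visit_index G I z = a}"
  then have z: "z \<in> nodes G" "visits G I z" by (auto simp: leaves_def)
  have "own_reach G i \<tau> (take (visit_index G I z) z) = own_reach_at G i \<tau> I"
    using own_reach_infoset[OF assms visit_index(2)[OF na z]] .
  then show "reach_except G \<tau> I z * util G i z = own_reach_at G i \<tau> I *
      (others_reach G i \<tau> (take (visit_index G I z) z) * reach_after G \<tau> I z * util G i z)"
    using reach_except_eq[OF na z] reach_eq_own_others[of G \<tau> _ i] by simp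
qed

lemma Fr_eq_cf_reach:
  assumes "efg G" "perfect_recall G" "I \<in> infosets G i"
  shows "Fr G \<tau> I = own_reach_at G i \<tau> I * cf_reach G i \<tau> I"
  unfolding Fr_def cf_reach_def sum_distrib_left
  by (rule sum.cong[OF refl]) (simp add: reach_eq_own_others[of G \<tau> _ i] own_reach_infoset[OF assms])

lemma PI_eq_cf_reach:
  "efg G \<Longrightarrow> perfect_recall G \<Longrightarrow> I \<in> infosets G i \<Longrightarrow>
    PI G \<tau> I = own_reach_at G i \<tau> I * cf_reach G i \<tau> I"
  by (simp add: PI_eq_Fr perfect_recall_not_absentminded Fr_eq_cf_reach)

lemma U_update_diff_cf_value:
  assumes "efg G" "perfect_recall G" "I \<in> infosets G i"
  shows "U G i (\<tau>(I := \<sigma>)) - U G i \<tau> =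
    own_reach_at G i \<tau> I * (\<Sum>a \<in> iacts G I. (\<sigma> a - \<tau> I a) * cf_value G i \<tau> I a)"
  unfolding U_update_diff[OF assms(1) perfect_recall_not_absentminded[OF assms(1,2)]]
    sum_distrib_left
  by (rule sum.cong[OF refl]) (simp add: U_coeff_eq_cf_value[OF assms])

lemma others_reach_cong:
  assumes "efg G" "h \<in> nodes G" "\<And>J. J \<notin> infosets G i \<Longrightarrow> \<tau> J = \<tau>' J"
  shows "others_reach G i \<tau> h = others_reach G i \<tau>' h"
  unfolding others_reach_def
proof (rule prod.cong[OF refl])
  fix k assume k: "k \<in> {k. k < length h \<and> who G (take k h) \<noteq> Some i}"
  show "actprob G \<tau> (take k h) (h ! k) = actprob G \<tau>' (take k h) (h ! k)"
  proof (cases "who G (take k h)")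
    case (Some j)
    then have "info G (take k h) \<notin> infosets G i"
      using k infoset_of_other_player[OF assms(1) take_in_nodes[OF assms(1,2)] acts_take_ne[OF assms(1,2)]]
      by simp
    then show ?thesis using Some assms(3) by (simp add: actprob_def)
  qed (simp add: actprob_def)
qed

lemma cf_reach_cong:
  "efg G \<Longrightarrow> (\<And>J. J \<notin> infosets G i \<Longrightarrow> \<tau> J = \<tau>' J) \<Longrightarrow> cf_reach G i \<tau> I = cf_reach G i \<tau>' I"
  unfolding cf_reach_def by (intro sum.cong refl others_reach_cong) (auto simp: inI_def)

lemma cf_value_cong:
  assumes "efg G" "perfect_recall G" "I \<in> infosets G i"
    and others: "\<And>J. J \<notin> infosets G i \<Longrightarrow> \<tau> J = \<tau>' J"
    and deeper: "\<And>J. J \<in> infosets G i \<Longrightarrow> own_depth G i I < own_depth G i J \<Longrightarrow> \<tau> J = \<tau>' J"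
  shows "cf_value G i \<tau> I a = cf_value G i \<tau>' I a"
  unfolding cf_value_def
proof (rule sum.cong[OF refl])
  fix z assume "z \<in> {z \<in> leaves G. visits G I z \<and> z ! visit_index G I z = a}"
  then have z: "z \<in> nodes G" "visits G I z" by (auto simp: leaves_def)
  have "actprob G \<tau> (take k z) (z ! k) = actprob G \<tau>' (take k z) (z ! k)"
    if k: "visit_index G I z < k" "k < length z" for k
  proof (cases "who G (take k z)")
    case (Some j)
    have "\<tau> (info G (take k z)) = \<tau>' (info G (take k z))"
    proof (cases "j = i")
      case True
      then have "info G (take k z) \<in> infosets G i"
        using pnodes_inI(2)[OF take_in_pnodes[OF assms(1) z(1) k(2)]] Some by simp
      then show ?thesis using deeper own_depth_less[OF assms(1,2) z assms(3) k] Some True by simp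
    next
      case False
      then show ?thesis
        using others infoset_of_other_player[OF assms(1) take_in_nodes[OF assms(1) z(1)]
            acts_take_ne[OF assms(1) z(1) k(2)] Some] by simp
    qed
    then show ?thesis using Some by (simp add: actprob_def)
  qed (simp add: actprob_def)
  then have "reach_after G \<tau> I z = reach_after G \<tau>' I z"
    unfolding reach_after_def by (intro prod.cong) auto
  moreover have "others_reach G i \<tau> (take (visit_index G I z) z) =
      others_reach G i \<tau>' (take (visit_index G I z) z)"
    using others_reach_cong[OF assms(1) take_in_nodes[OF assms(1) z(1)] others] .
  ultimately show "others_reach G i \<tau> (take (visit_index G I z) z) * reach_after G \<tau> I z * util G i z =
      others_reach G i \<tau>' (take (visit_index G I z) z) * reach_after G \<tau>' I z * util G i z"
    by simp
qed

lemma own_move: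
  assumes "efg G" "h \<in> nodes G" "k < length h" "who G (take k h) = Some i"
  shows "info G (take k h) \<in> infosets G i" "h ! k \<in> iacts G (info G (take k h))"
    "actprob G \<tau> (take k h) (h ! k) = \<tau> (info G (take k h)) (h ! k)"
proof -
  note p = pnodes_inI[OF take_in_pnodes[OF assms]]
  show "info G (take k h) \<in> infosets G i" by (fact p(2))
  show "h ! k \<in> iacts G (info G (take k h))"
    using iacts_eq_acts[OF assms(1) p(1)] nth_in_acts_take[OF assms(1-3)] by simp
  show "actprob G \<tau> (take k h) (h ! k) = \<tau> (info G (take k h)) (h ! k)"
    using assms(4) by (simp add: actprob_def)
qed

lemma own_reach_bounds:
  assumes "efg G" "profile G \<tau>" "h \<in> nodes G"
  shows "0 \<le> own_reach G i \<tau> h" "own_reach G i \<tau> h \<le> 1"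
  unfolding own_reach_def
  using prod_actprob_bounds[OF assms, of "{k. k < length h \<and> who G (take k h) = Some i}"] by auto

lemma others_reach_bounds:
  assumes "efg G" "profile G \<tau>" "h \<in> nodes G"
  shows "0 \<le> others_reach G i \<tau> h" "others_reach G i \<tau> h \<le> 1"
  unfolding others_reach_def
  using prod_actprob_bounds[OF assms, of "{k. k < length h \<and> who G (take k h) \<noteq> Some i}"] by auto

lemma own_reach_pos:
  assumes "efg G" "h \<in> nodes G" "\<And>I a. I \<in> infosets G i \<Longrightarrow> a \<in> iacts G I \<Longrightarrow> 0 < \<tau> I a"
  shows "0 < own_reach G i \<tau> h"
  unfolding own_reach_def
proof (rule prod_pos)
  fix k assume "k \<in> {k. k < length h \<and> who G (take k h) = Some i}"
  then have k: "k < length h" "who G (take k h) = Some i" by auto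
  show "0 < actprob G \<tau> (take k h) (h ! k)"
    using own_move[OF assms(1,2) k] assms(3) by simp
qed

lemma own_reach_ge_power:
  assumes "efg G" "h \<in> nodes G" "0 \<le> t" "t \<le> 1"
    "\<And>I a. I \<in> infosets G i \<Longrightarrow> a \<in> iacts G I \<Longrightarrow> t \<le> \<tau> I a"
  shows "t ^ length h \<le> own_reach G i \<tau> h"
proof -
  let ?K = "{k. k < length h \<and> who G (take k h) = Some i}"
  have "t ^ length h \<le> t ^ card ?K"
    using assms(3,4) card_mono[of "{..<length h}" ?K] by (intro power_decreasing) auto
  also have "t ^ card ?K = (\<Prod>k \<in> ?K. t)" by simp
  also have "\<dots> \<le> own_reach G i \<tau> h"
    unfolding own_reach_def
  proof (rule prod_mono)
    fix k assume "k \<in> ?K"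
    then have k: "k < length h" "who G (take k h) = Some i" by auto
    show "0 \<le> t \<and> t \<le> actprob G \<tau> (take k h) (h ! k)"
      using own_move[OF assms(1,2) k] assms(3,5) by simp
  qed
  finally show ?thesis .
qed

lemma own_reach_at_bounds:
  assumes "efg G" "profile G \<tau>" "I \<in> infosets G i"
  shows "0 \<le> own_reach_at G i \<tau> I" "own_reach_at G i \<tau> I \<le> 1"
  unfolding own_reach_at_def using own_reach_bounds[OF assms(1,2) inI_nodes[OF some_in_infoset[OF assms(3)]]]
  by auto

lemma own_reach_at_pos:
  assumes "efg G" "I \<in> infosets G i" "\<And>I a. I \<in> infosets G i \<Longrightarrow> a \<in> iacts G I \<Longrightarrow> 0 < \<tau> I a"
  shows "0 < own_reach_at G i \<tau> I"
  unfolding own_reach_at_def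
  using own_reach_pos[OF assms(1) inI_nodes[OF some_in_infoset[OF assms(2)]] assms(3)] .

lemma own_reach_at_ge_power:
  assumes "efg G" "I \<in> infosets G i" "0 \<le> t" "t \<le> 1"
    "\<And>I a. I \<in> infosets G i \<Longrightarrow> a \<in> iacts G I \<Longrightarrow> t \<le> \<tau> I a"
    "\<And>h. h \<in> nodes G \<Longrightarrow> length h \<le> L"
  shows "t ^ L \<le> own_reach_at G i \<tau> I"
proof -
  have h: "(SOME h. h \<in> inI G I) \<in> nodes G" using inI_nodes[OF some_in_infoset[OF assms(2)]] .
  have "t ^ L \<le> t ^ length (SOME h. h \<in> inI G I)"
    using assms(3,4) assms(6)[OF h] by (intro power_decreasing) auto
  also have "\<dots> \<le> own_reach_at G i \<tau> I"
    unfolding own_reach_at_def using own_reach_ge_power[OF assms(1) h assms(3-5)] .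
  finally show ?thesis .
qed

lemma cf_reach_nonneg: assumes "efg G" "profile G \<tau>" shows "0 \<le> cf_reach G i \<tau> I"
  unfolding cf_reach_def by (intro sum_nonneg others_reach_bounds(1)[OF assms inI_nodes])

lemma cf_value_bounds:
  assumes "efg G" "profile G \<tau>"
  shows "0 \<le> cf_value G i \<tau> I a" "cf_value G i \<tau> I a \<le> (\<Sum>z \<in> leaves G. util G i z)"
proof -
  have bounded: "0 \<le> others_reach G i \<tau> (take (visit_index G I z) z) * reach_after G \<tau> I z * util G i z \<and>
     others_reach G i \<tau> (take (visit_index G I z) z) * reach_after G \<tau> I z * util G i z \<le> util G i z"
    if z: "z \<in> leaves G" for z
  proof -
    have zn: "z \<in> nodes G" using leaves_nodes[OF z] .
    have "0 \<le> others_reach G i \<tau> (take (visit_index G I z) z)"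
      "others_reach G i \<tau> (take (visit_index G I z) z) \<le> 1"
      using others_reach_bounds[OF assms take_in_nodes[OF assms(1) zn]] by auto
    moreover have "0 \<le> reach_after G \<tau> I z" "reach_after G \<tau> I z \<le> 1"
      unfolding reach_after_def using prod_actprob_bounds[OF assms zn] by (auto simp: subset_iff)
    ultimately show ?thesis
      using util_nonneg[OF assms(1) z] by (simp add: mult_le_one mult_left_le_one_le)
  qed
  show "0 \<le> cf_value G i \<tau> I a" unfolding cf_value_def using bounded by (intro sum_nonneg) auto
  have "cf_value G i \<tau> I a \<le> (\<Sum>z \<in> {z \<in> leaves G. visits G I z \<and> z ! visit_index G I z = a}. util G i z)"
    unfolding cf_value_def using bounded by (intro sum_mono) auto
  also have "\<dots> \<le> (\<Sum>z \<in> leaves G. util G i z)"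
    using finite_leaves[OF assms(1)] util_nonneg[OF assms(1)] by (intro sum_mono2) auto
  finally show "cf_value G i \<tau> I a \<le> (\<Sum>z \<in> leaves G. util G i z)" .
qed

lemma cf_value_eq_0_if_cf_reach_eq_0:
  assumes "efg G" "\<not> absentminded G" "profile G \<tau>" "cf_reach G i \<tau> I = 0"
  shows "cf_value G i \<tau> I a = 0"
proof -
  have "\<forall>h \<in> inI G I. others_reach G i \<tau> h = 0"
    using assms(4) sum_nonneg_eq_0_iff[OF finite_inI[OF assms(1)]]
      others_reach_bounds(1)[OF assms(1,3) inI_nodes]
    unfolding cf_reach_def by blast
  moreover have "take (visit_index G I z) z \<in> inI G I" if "z \<in> leaves G" "visits G I z" for z
    using visit_index(2)[OF assms(2) leaves_nodes[OF that(1)]] that(2) .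
  ultimately show ?thesis unfolding cf_value_def by (intro sum.neutral) auto
qed

lemma cf_value_tendsto:
  "(\<And>I a. (\<lambda>k. f k I a) \<longlonglongrightarrow> g I a) \<Longrightarrow> (\<lambda>k. cf_value G i (f k) I a) \<longlonglongrightarrow> cf_value G i g I a"
  unfolding cf_value_def others_reach_def reach_after_def
  by (intro tendsto_sum tendsto_mult_right tendsto_mult tendsto_prod actprob_tendsto)

section \<open>EDT-rational strategies are optimal\<close>

lemma deviation_step_le:
  assumes "efg G" "perfect_recall G" "profile G p" "I \<in> infosets G i" "0 \<le> \<epsilon>"
    and pos: "0 < own_reach_at G i p I"
    and EC: "0 < PI G p I \<Longrightarrow> (U G i (p(I := \<sigma>)) - U G i p) / PI G p I \<le> \<epsilon>"
    and dev: "devs G i p \<tau>" "\<tau> I = p I"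
    and deeper: "\<And>J. J \<in> infosets G i \<Longrightarrow> own_depth G i I < own_depth G i J \<Longrightarrow> \<tau> J = p J"
  shows "U G i (\<tau>(I := \<sigma>)) - U G i \<tau> \<le> \<epsilon> * cf_reach G i p I"
proof -
  have P: "profile G p" "profile G \<tau>" and others: "\<And>J. J \<notin> infosets G i \<Longrightarrow> \<tau> J = p J"
    using dev(1) assms(3) by (auto simp: devs_def)
  define X where "X = (\<Sum>a \<in> iacts G I. (\<sigma> a - p I a) * cf_value G i p I a)"
  have "cf_value G i \<tau> I a = cf_value G i p I a" for a
    using cf_value_cong[OF assms(1,2,4) others deeper] .
  then have gain_\<tau>: "U G i (\<tau>(I := \<sigma>)) - U G i \<tau> = own_reach_at G i \<tau> I * X"
    unfolding X_def U_update_diff_cf_value[OF assms(1,2,4)] dev(2) by simp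
  have gain_p: "U G i (p(I := \<sigma>)) - U G i p = own_reach_at G i p I * X"
    unfolding X_def U_update_diff_cf_value[OF assms(1,2,4)] ..
  have own_\<tau>: "0 \<le> own_reach_at G i \<tau> I" "own_reach_at G i \<tau> I \<le> 1"
    using own_reach_at_bounds[OF assms(1) P(2) assms(4)] by auto
  show ?thesis
  proof (cases "cf_reach G i p I = 0")
    case True
    then have "X = 0"
      unfolding X_def using cf_value_eq_0_if_cf_reach_eq_0[OF assms(1)
          perfect_recall_not_absentminded[OF assms(1,2)] P(1)] by simp
    then show ?thesis using gain_\<tau> True by simp
  next
    case False
    then have cf_pos: "0 < cf_reach G i p I" using cf_reach_nonneg[OF assms(1) P(1), of i I] by simp
    have PI: "PI G p I = own_reach_at G i p I * cf_reach G i p I"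
      using PI_eq_cf_reach[OF assms(1,2,4)] .
    then have "own_reach_at G i p I * X / (own_reach_at G i p I * cf_reach G i p I) \<le> \<epsilon>"
      using EC pos cf_pos gain_p by simp
    then have X_le: "X \<le> \<epsilon> * cf_reach G i p I" using pos cf_pos by (simp add: pos_divide_le_eq)
    show ?thesis
    proof (cases "X \<le> 0")
      case True
      then show ?thesis
        using gain_\<tau> own_\<tau> assms(5) cf_pos by (simp add: mult_nonneg_nonpos order_trans[OF _ mult_nonneg_nonneg])
    next
      case False
      then have "own_reach_at G i \<tau> I * X \<le> X" using own_\<tau> by (intro mult_left_le_one_le) auto
      then show ?thesis using gain_\<tau> X_le by simp
    qed
  qed
qed

lemma deviation_gain_le:
  assumes "efg G" "perfect_recall G" "profile G p"
    and pos: "\<And>I a. I \<in> infosets G i \<Longrightarrow> a \<in> iacts G I \<Longrightarrow> 0 < p I a"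
    and "0 \<le> \<epsilon>"
    and EC: "\<And>I \<sigma>. I \<in> infosets G i \<Longrightarrow> 0 < PI G p I \<Longrightarrow> behav G I \<sigma> \<Longrightarrow>
      (U G i (p(I := \<sigma>)) - U G i p) / PI G p I \<le> \<epsilon>"
  shows "devs G i p \<tau> \<Longrightarrow>
    U G i \<tau> - U G i p \<le> \<epsilon> * (\<Sum>J \<in> {J \<in> infosets G i. \<tau> J \<noteq> p J}. cf_reach G i p J)"
proof (induction "card {J \<in> infosets G i. \<tau> J \<noteq> p J}" arbitrary: \<tau> rule: less_induct)
  case less
  define D where "D = {J \<in> infosets G i. \<tau> J \<noteq> p J}"
  have fin: "finite D" unfolding D_def using finite_infosets[OF assms(1)] by simp
  have P: "profile G \<tau>" and others: "\<And>J. J \<notin> infosets G i \<Longrightarrow> \<tau> J = p J"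
    using less.prems unfolding devs_def by blast+
  show ?case
  proof (cases "D = {}")
    case True
    then have "\<tau> = p" using others unfolding D_def by blast
    then show ?thesis by simp
  next
    case False
    obtain I where I: "I \<in> D" "\<And>J. J \<in> D \<Longrightarrow> own_depth G i J \<le> own_depth G i I"
      using Max_in[of "own_depth G i ` D"] Max_ge[of "own_depth G i ` D"] fin False by fastforce
    have I_inf: "I \<in> infosets G i" using I(1) by (simp add: D_def)
    define \<tau>' where "\<tau>' = \<tau>(I := p I)"
    have dev': "devs G i p \<tau>'"
      unfolding \<tau>'_def using devs_update[OF less.prems I_inf profile_behav[OF assms(3) I_inf]] .
    have D': "{J \<in> infosets G i. \<tau>' J \<noteq> p J} = D - {I}" unfolding D_def \<tau>'_def by auto
    have "card (D - {I}) < card D" using fin I(1) by (meson card_Diff1_less)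
    then have IH: "U G i \<tau>' - U G i p \<le> \<epsilon> * (\<Sum>J \<in> D - {I}. cf_reach G i p J)"
      using less.hyps[OF _ dev'] unfolding D' D_def by simp
    have deeper: "\<tau>' J = p J" if "J \<in> infosets G i" "own_depth G i I < own_depth G i J" for J
      using that I(2)[of J] unfolding \<tau>'_def D_def by fastforce
    have "U G i (\<tau>'(I := \<tau> I)) - U G i \<tau>' \<le> \<epsilon> * cf_reach G i p I"
      by (rule deviation_step_le[OF assms(1-3) I_inf assms(5) own_reach_at_pos[OF assms(1) I_inf pos]
          EC[OF I_inf _ profile_behav[OF P I_inf]] dev' _ deeper]) (simp_all add: \<tau>'_def)
    moreover have "\<tau>'(I := \<tau> I) = \<tau>" unfolding \<tau>'_def by simp
    moreover have "(\<Sum>J \<in> D. cf_reach G i p J) = cf_reach G i p I + (\<Sum>J \<in> D - {I}. cf_reach G i p J)"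
      using fin I(1) by (simp add: sum.remove)
    ultimately show ?thesis using IH unfolding D_def by (simp add: distrib_left)
  qed
qed

lemma EDT_rational_optimal:
  assumes "efg G" "perfect_recall G" "EDT_rational G i \<rho>" "devs G i \<rho> \<tau>"
  shows "U G i \<tau> \<le> U G i \<rho>"
proof -
  obtain \<pi>s \<epsilon> where dev: "\<And>k. devs G i \<rho> (\<pi>s k)"
    and pos: "\<And>k I a. I \<in> infosets G i \<Longrightarrow> a \<in> iacts G I \<Longrightarrow> 0 < \<pi>s k I a"
    and lim: "\<And>I a. (\<lambda>k. \<pi>s k I a) \<longlonglongrightarrow> \<rho> I a"
    and \<epsilon>: "\<And>k. 0 < \<epsilon> k" "\<epsilon> \<longlonglongrightarrow> 0"
    and EC: "\<And>k I \<sigma>. I \<in> infosets G i \<Longrightarrow> PI G (\<pi>s k) I > 0 \<Longrightarrow> behav G I \<sigma> \<Longrightarrow>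
      (U G i ((\<pi>s k)(I := \<sigma>)) - U G i (\<pi>s k)) / PI G (\<pi>s k) I \<le> \<epsilon> k"
    using assms(3) unfolding EDT_rational_def by metis
  define C where "C = (\<Sum>J \<in> infosets G i. cf_reach G i \<rho> J)"
  have "U G i \<tau> - U G i (\<pi>s k) \<le> \<epsilon> k * C" for k
  proof -
    have P: "profile G (\<pi>s k)" and others: "\<And>J. J \<notin> infosets G i \<Longrightarrow> \<pi>s k J = \<rho> J"
      using dev[of k] unfolding devs_def by blast+
    have dev_k: "devs G i (\<pi>s k) \<tau>" using assms(4) others unfolding devs_def by simp
    have "U G i \<tau> - U G i (\<pi>s k) \<le>
        \<epsilon> k * (\<Sum>J \<in> {J \<in> infosets G i. \<tau> J \<noteq> \<pi>s k J}. cf_reach G i (\<pi>s k) J)"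
      by (rule deviation_gain_le[where i = i, OF assms(1,2) P pos less_imp_le[OF \<epsilon>(1)] EC dev_k])
    also have "\<dots> \<le> \<epsilon> k * (\<Sum>J \<in> infosets G i. cf_reach G i (\<pi>s k) J)"
      using finite_infosets[OF assms(1)] cf_reach_nonneg[OF assms(1) P] \<epsilon>(1)[of k]
      by (intro mult_left_mono sum_mono2) auto
    also have "(\<Sum>J \<in> infosets G i. cf_reach G i (\<pi>s k) J) = C"
      unfolding C_def using cf_reach_cong[OF assms(1) others] by simp
    finally show ?thesis .
  qed
  moreover have "(\<lambda>k. U G i \<tau> - U G i (\<pi>s k)) \<longlonglongrightarrow> U G i \<tau> - U G i \<rho>"
    by (intro tendsto_diff tendsto_const U_tendsto lim)
  moreover have "(\<lambda>k. \<epsilon> k * C) \<longlonglongrightarrow> 0 * C" by (intro tendsto_mult_right \<epsilon>(2))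
  ultimately have "U G i \<tau> - U G i \<rho> \<le> 0 * C" by (intro LIMSEQ_le) auto
  then show ?thesis by simp
qed

lemma EDT_Nash_imp_Nash:
  assumes "efg G" "perfect_recall G" "EDT_Nash G \<pi>" shows "Nash G \<pi>"
  unfolding Nash_def
proof (intro conjI allI impI)
  show "profile G \<pi>" using assms(3) by (simp add: EDT_Nash_def EDT_eq_def)
  fix i \<tau> assume dev: "devs G i \<pi> \<tau>"
  obtain \<rho> where \<rho>: "devs G i \<pi> \<rho>" "\<forall>h \<in> nodes G. reach G \<rho> h = reach G \<pi> h" "EDT_rational G i \<rho>"
    using assms(3) unfolding EDT_Nash_def by blast
  have "devs G i \<rho> \<tau>" using dev \<rho>(1) unfolding devs_def by simp
  then have "U G i \<tau> \<le> U G i \<rho>" by (rule EDT_rational_optimal[OF assms(1,2) \<rho>(3)])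
  then show "U G i \<tau> \<le> U G i \<pi>" using U_eq_if_reach_eq[OF \<rho>(2)] by simp
qed

lemma Nash_imp_EDT_eq: "Nash G \<pi> \<Longrightarrow> EDT_eq G \<pi>"
  unfolding Nash_def EDT_eq_def using devs_update[of G _ \<pi> \<pi>] by (auto simp: devs_def)

section \<open>Nash equilibria are EDT-Nash equilibria under perfect recall\<close>

lemma exists_near_max:
  fixes f :: "'x \<Rightarrow> real"
  assumes "S \<noteq> {}" "\<And>x. x \<in> S \<Longrightarrow> f x \<le> B" "0 < \<eta>"
  shows "\<exists>x\<in>S. \<forall>y\<in>S. f y < f x + \<eta>"
proof -
  have ne: "f ` S \<noteq> {}" using assms(1) by simp
  have bdd: "bdd_above (f ` S)" using assms(2) by (intro bdd_aboveI[where M = B]) auto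
  obtain x where x: "x \<in> S" "Sup (f ` S) - \<eta> < f x"
    using less_cSup_iff[OF ne bdd, of "Sup (f ` S) - \<eta>"] assms(3) by auto
  have "f y \<le> Sup (f ` S)" if "y \<in> S" for y using cSup_upper[OF _ bdd] that by simp
  then show ?thesis using x by force
qed

lemma finite_bounded_convergent_subseq:
  fixes x :: "nat \<Rightarrow> 'b \<Rightarrow> real"
  assumes "finite P" "\<And>k p. p \<in> P \<Longrightarrow> \<bar>x k p\<bar> \<le> B"
  shows "\<exists>r l. strict_mono r \<and> (\<forall>p\<in>P. (\<lambda>k. x (r k) p) \<longlonglongrightarrow> l p)"
  using assms
proof (induction P rule: finite_induct)
  case empty
  have "strict_mono (id :: nat \<Rightarrow> nat)" by (simp add: strict_mono_def)
  then show ?case by blast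
next
  case (insert p P)
  then obtain r l where r: "strict_mono r" "\<forall>q\<in>P. (\<lambda>k. x (r k) q) \<longlonglongrightarrow> l q" by blast
  obtain f where f: "strict_mono f" "monoseq (\<lambda>n. x (r (f n)) p)"
    using seq_monosub[of "\<lambda>n. x (r n) p"] by blast
  have "Bseq (\<lambda>n. x (r (f n)) p)" using insert.prems by (intro BseqI'[where K=B]) auto
  then obtain lp where lp: "(\<lambda>n. x (r (f n)) p) \<longlonglongrightarrow> lp"
    using Bseq_monoseq_convergent f(2) by (auto simp: convergent_def)
  have "(\<lambda>k. x ((r \<circ> f) k) q) \<longlonglongrightarrow> (l(p := lp)) q" if q: "q \<in> insert p P" for q
  proof (cases "q = p")
    case False
    then have "((\<lambda>k. x (r k) q) \<circ> f) \<longlonglongrightarrow> l q" using r(2) q LIMSEQ_subseq_LIMSEQ f(1) by blast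
    then show ?thesis using False by (simp add: o_def)
  qed (use lp in simp)
  then show ?case using strict_mono_o[OF r(1) f(1)] by blast
qed

definition uniform_mix :: "('a, 'p, 'i) game \<Rightarrow> real \<Rightarrow> 'i \<Rightarrow> ('a \<Rightarrow> real) \<Rightarrow> 'a \<Rightarrow> real" where
  "uniform_mix G t I \<sigma> = (\<lambda>a. if a \<in> iacts G I then (1 - real (card (iacts G I)) * t) * \<sigma> a + t else 0)"

lemma uniform_mix_behav:
  assumes "efg G" "behav G I \<sigma>" "0 \<le> t" "real (card (iacts G I)) * t \<le> 1"
  shows "behav G I (uniform_mix G t I \<sigma>)" "\<And>a. a \<in> iacts G I \<Longrightarrow> t \<le> uniform_mix G t I \<sigma> a"
proof -
  let ?n = "real (card (iacts G I))"
  have s1: "sum \<sigma> (iacts G I) = 1" and nn: "\<And>a. a \<in> iacts G I \<Longrightarrow> 0 \<le> \<sigma> a"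
    using assms(2) by (auto simp: behav_def)
  show "\<And>a. a \<in> iacts G I \<Longrightarrow> t \<le> uniform_mix G t I \<sigma> a"
    unfolding uniform_mix_def using nn assms(4) by simp
  have "sum (uniform_mix G t I \<sigma>) (iacts G I) = (\<Sum>a \<in> iacts G I. (1 - ?n * t) * \<sigma> a + t)"
    unfolding uniform_mix_def by (rule sum.cong) auto
  also have "\<dots> = 1" using s1 by (simp add: sum.distrib sum_distrib_left[symmetric])
  finally show "behav G I (uniform_mix G t I \<sigma>)"
    unfolding behav_def using nn assms(3,4) by (auto simp: uniform_mix_def)
qed

lemma uniform_mix_tendsto:
  assumes "t \<longlonglongrightarrow> 0" "behav G I \<sigma>"
  shows "(\<lambda>k. uniform_mix G (t k) I \<sigma> a) \<longlonglongrightarrow> \<sigma> a"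
proof (cases "a \<in> iacts G I")
  case True
  have "(\<lambda>k. (1 - real (card (iacts G I)) * t k) * \<sigma> a + t k) \<longlonglongrightarrow>
      (1 - real (card (iacts G I)) * 0) * \<sigma> a + 0"
    by (intro tendsto_intros assms(1))
  then show ?thesis using True by (simp add: uniform_mix_def)
qed (use assms(2) in \<open>simp add: uniform_mix_def behav_def\<close>)

lemma behav_limit:
  assumes "\<And>k. behav G I (\<sigma>s k)" "\<And>a. (\<lambda>k. \<sigma>s k a) \<longlonglongrightarrow> \<sigma> a"
  shows "behav G I \<sigma>"
proof -
  have "0 \<le> \<sigma> a" if "a \<in> iacts G I" for a
    using assms that by (intro LIMSEQ_le_const[OF assms(2)]) (auto simp: behav_def)
  moreover have "(\<lambda>k. \<Sum>a \<in> iacts G I. \<sigma>s k a) \<longlonglongrightarrow> (\<Sum>a \<in> iacts G I. \<sigma> a)"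
    by (intro tendsto_sum assms(2))
  then have "sum \<sigma> (iacts G I) = 1"
    using assms(1) LIMSEQ_unique[OF _ tendsto_const] by (simp add: behav_def)
  moreover have "\<sigma> a = 0" if "a \<notin> iacts G I" for a
    using assms(1) that LIMSEQ_unique[OF assms(2)[of a]] by (simp add: behav_def)
  ultimately show ?thesis by (simp add: behav_def)
qed

lemma devs_convergent_subseq:
  fixes G :: "('a, 'p, 'i) game" and f :: "nat \<Rightarrow> ('i, 'a) profile"
  assumes "efg G" "\<And>k. devs G i \<pi> (f k)"
  shows "\<exists>r \<rho>. strict_mono r \<and> (\<forall>I a. (\<lambda>k. f (r k) I a) \<longlonglongrightarrow> \<rho> I a)"
proof -
  let ?P = "Sigma (infosets G i) (iacts G)"
  have P: "profile G (f k)" "\<And>J. J \<notin> infosets G i \<Longrightarrow> f k J = \<pi> J" for k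
    using assms(2)[of k] by (auto simp: devs_def)
  have "\<bar>f k I a\<bar> \<le> 1" if "(I, a) \<in> ?P" for k I a
    using behav_bounds[OF assms(1) profile_behav[OF P(1)]] that by force
  then obtain r l where r: "strict_mono r" "\<forall>p\<in>?P. (\<lambda>k. f (r k) (fst p) (snd p)) \<longlonglongrightarrow> l p"
    using finite_bounded_convergent_subseq[of ?P "\<lambda>k p. f k (fst p) (snd p)" 1]
      finite_infosets[OF assms(1)] finite_iacts[OF assms(1)] by fastforce
  define \<rho> where "\<rho> I a = (if I \<notin> infosets G i then \<pi> I a else if a \<in> iacts G I then l (I, a) else 0)"
    for I a
  have "(\<lambda>k. f (r k) I a) \<longlonglongrightarrow> \<rho> I a" for I a
    using r(2) P(2) profile_behav[OF P(1)] by (cases "(I, a) \<in> ?P") (auto simp: \<rho>_def behav_def)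
  then show ?thesis using r(1) by blast
qed

lemma realization_equiv_if_agree_on_own_reachable:
  assumes "efg G" "profile G \<pi>" "devs G i \<pi> \<rho>"
    and agree: "\<And>I. I \<in> infosets G i \<Longrightarrow> \<exists>h\<in>inI G I. 0 < own_reach G i \<pi> h \<Longrightarrow> \<rho> I = \<pi> I"
  shows "\<forall>h\<in>nodes G. reach G \<rho> h = reach G \<pi> h"
proof
  fix h show "h \<in> nodes G \<Longrightarrow> reach G \<rho> h = reach G \<pi> h"
  proof (induction h rule: rev_induct)
    case Nil then show ?case by (simp add: reach_def)
  next
    case (snoc a g)
    have g: "g \<in> nodes G" using node_prefix[OF assms(1) snoc.prems] .
    have IH: "reach G \<rho> g = reach G \<pi> g" using snoc.IH[OF g] .
    show ?case
    proof (cases "actprob G \<rho> g a = actprob G \<pi> g a")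
      case False
      then obtain j where j: "who G g = Some j" by (cases "who G g") (auto simp: actprob_def)
      then have ne: "\<rho> (info G g) \<noteq> \<pi> (info G g)" using False by (auto simp: actprob_def)
      then have I: "info G g \<in> infosets G i" using assms(3) by (auto simp: devs_def)
      have "g \<in> inI G (info G g)" using g j snoc.prems by (auto simp: inI_def acts_def)
      then have "own_reach G i \<pi> g = 0"
        using agree[OF I] ne own_reach_bounds(1)[OF assms(1,2) g, of i] by force
      then show ?thesis using IH reach_eq_own_others[of G \<pi> g i] by (simp add: reach_snoc)
    qed (simp add: IH reach_snoc)
  qed
qed

definition cf_regret :: "('a, 'p, 'i) game \<Rightarrow> 'p \<Rightarrow> ('i, 'a) profile \<Rightarrow> 'i \<Rightarrow> real" where
  "cf_regret G i \<tau> I = (\<Sum>a \<in> iacts G I.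
     max 0 (cf_value G i \<tau> I a - (\<Sum>b \<in> iacts G I. \<tau> I b * cf_value G i \<tau> I b)))"

lemma U_update_le_cf_regret:
  assumes "efg G" "perfect_recall G" "profile G \<tau>" "I \<in> infosets G i" "behav G I \<sigma>"
  shows "U G i (\<tau>(I := \<sigma>)) - U G i \<tau> \<le> own_reach_at G i \<tau> I * cf_regret G i \<tau> I"
proof -
  let ?v = "cf_value G i \<tau> I" and ?A = "iacts G I"
  let ?c = "\<Sum>b \<in> ?A. \<tau> I b * ?v b"
  have "(\<Sum>a \<in> ?A. (\<sigma> a - \<tau> I a) * ?v a) = (\<Sum>a \<in> ?A. \<sigma> a * ?v a) - ?c"
    by (simp add: left_diff_distrib sum_subtractf)
  also have "\<dots> = (\<Sum>a \<in> ?A. \<sigma> a * (?v a - ?c))"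
    using assms(5) by (simp add: behav_def right_diff_distrib sum_subtractf sum_distrib_right[symmetric])
  also have "\<dots> \<le> cf_regret G i \<tau> I"
    unfolding cf_regret_def
  proof (rule sum_mono)
    fix a assume "a \<in> ?A"
    then have s0: "0 \<le> \<sigma> a" and s1: "\<sigma> a \<le> 1" using behav_bounds[OF assms(1,5)] by auto
    have "\<sigma> a * (?v a - ?c) \<le> \<sigma> a * max 0 (?v a - ?c)" using s0 by (intro mult_left_mono) auto
    also have "\<dots> \<le> max 0 (?v a - ?c)" using s0 s1 by (intro mult_left_le_one_le) auto
    finally show "\<sigma> a * (?v a - ?c) \<le> max 0 (?v a - ?c)" .
  qed
  finally show ?thesis
    unfolding U_update_diff_cf_value[OF assms(1,2,4)]
    using own_reach_at_bounds(1)[OF assms(1,3,4)] by (simp add: mult_left_mono)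
qed

lemma cf_regret_tendsto:
  "(\<And>I a. (\<lambda>k. f k I a) \<longlonglongrightarrow> g I a) \<Longrightarrow> (\<lambda>k. cf_regret G i (f k) I) \<longlonglongrightarrow> cf_regret G i g I"
  unfolding cf_regret_def
  by (intro tendsto_sum tendsto_max tendsto_const tendsto_diff tendsto_mult cf_value_tendsto)

lemma Nash_cf_regret_eq_0:
  assumes "efg G" "perfect_recall G" "Nash G \<pi>" "devs G i \<pi> \<rho>"
    and real: "\<forall>h\<in>nodes G. reach G \<rho> h = reach G \<pi> h"
    and I: "I \<in> infosets G i" "h \<in> inI G I" "0 < reach G \<pi> h"
  shows "cf_regret G i \<rho> I = 0"
proof -
  have P: "profile G \<rho>" using assms(4) by (simp add: devs_def)
  have h: "h \<in> nodes G" using inI_nodes[OF I(2)] .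
  have "0 < own_reach G i \<rho> h * others_reach G i \<rho> h"
    using I(3) real h reach_eq_own_others[of G \<rho> h i] by simp
  then have "own_reach G i \<rho> h \<noteq> 0" by auto
  then have own_pos: "0 < own_reach_at G i \<rho> I"
    using own_reach_infoset[OF assms(1,2) I(1,2)] own_reach_bounds(1)[OF assms(1) P h, of i]
    by (simp add: less_le)
  have "cf_value G i \<rho> I a \<le> (\<Sum>b \<in> iacts G I. \<rho> I b * cf_value G i \<rho> I b)"
    if a: "a \<in> iacts G I" for a
  proof -
    define \<delta> where "\<delta> b = (if b = a then 1 else 0 :: real)" for b
    have "devs G i \<pi> (\<rho>(I := \<delta>))"
      unfolding \<delta>_def using devs_update[OF assms(4) I(1) behav_pure[OF assms(1) a]] .
    then have "U G i (\<rho>(I := \<delta>)) - U G i \<rho> \<le> 0"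
      using assms(3) U_eq_if_reach_eq[OF real] unfolding Nash_def by fastforce
    moreover have "(\<Sum>b \<in> iacts G I. (\<delta> b - \<rho> I b) * cf_value G i \<rho> I b) =
        cf_value G i \<rho> I a - (\<Sum>b \<in> iacts G I. \<rho> I b * cf_value G i \<rho> I b)"
    proof -
      have "(\<Sum>b \<in> iacts G I. \<delta> b * cf_value G i \<rho> I b) =
          (\<Sum>b \<in> iacts G I. if b = a then cf_value G i \<rho> I b else 0)"
        by (rule sum.cong) (simp_all add: \<delta>_def)
      then show ?thesis using a finite_iacts[OF assms(1)] by (simp add: left_diff_distrib sum_subtractf)
    qed
    ultimately show ?thesis
      using U_update_diff_cf_value[OF assms(1,2) I(1)] own_pos by (simp add: mult_le_0_iff)
  qed
  then show ?thesis unfolding cf_regret_def by (intro sum.neutral) auto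
qed

lemma U_update_uniform_mix_le:
  assumes "efg G" "perfect_recall G" "profile G \<tau>" "I \<in> infosets G i" "behav G I \<sigma>" "0 \<le> t"
  shows "U G i (\<tau>(I := \<sigma>)) - U G i (\<tau>(I := uniform_mix G t I \<sigma>)) \<le>
    t * real (card (iacts G I))^2 * own_reach_at G i \<tau> I * (\<Sum>z \<in> leaves G. util G i z)"
proof -
  let ?n = "real (card (iacts G I))" and ?o = "own_reach_at G i \<tau> I"
  let ?Ut = "\<Sum>z \<in> leaves G. util G i z"
  have na: "\<not> absentminded G" using perfect_recall_not_absentminded[OF assms(1,2)] .
  have "U G i (\<tau>(I := \<sigma>)) - U G i (\<tau>(I := uniform_mix G t I \<sigma>)) =
      (\<Sum>a \<in> iacts G I. (\<sigma> a - uniform_mix G t I \<sigma> a) * U_coeff G i \<tau> I a)"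
    unfolding U_update[OF assms(1) na] by (simp add: left_diff_distrib sum_subtractf)
  also have "\<dots> \<le> (\<Sum>a \<in> iacts G I. ?n * t * (?o * ?Ut))"
  proof (rule sum_mono)
    fix a assume a: "a \<in> iacts G I"
    have "\<sigma> a - uniform_mix G t I \<sigma> a = ?n * t * \<sigma> a - t"
      using a by (simp add: uniform_mix_def algebra_simps)
    also have "\<dots> \<le> ?n * t"
      using mult_left_le[OF behav_bounds(2)[OF assms(1,5) a], of "?n * t"] assms(6) by simp
    finally have le: "\<sigma> a - uniform_mix G t I \<sigma> a \<le> ?n * t" .
    have "0 \<le> U_coeff G i \<tau> I a" "U_coeff G i \<tau> I a \<le> ?o * ?Ut"
      using U_coeff_eq_cf_value[OF assms(1,2,4)] own_reach_at_bounds(1)[OF assms(1,3,4)]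
        cf_value_bounds[OF assms(1,3)] by (simp_all add: mult_left_mono)
    then have "(\<sigma> a - uniform_mix G t I \<sigma> a) * U_coeff G i \<tau> I a \<le> ?n * t * U_coeff G i \<tau> I a"
      "?n * t * U_coeff G i \<tau> I a \<le> ?n * t * (?o * ?Ut)"
      using le assms(6) by (simp_all add: mult_right_mono mult_left_mono)
    then show "(\<sigma> a - uniform_mix G t I \<sigma> a) * U_coeff G i \<tau> I a \<le> ?n * t * (?o * ?Ut)"
      by linarith
  qed
  also have "\<dots> = t * ?n^2 * ?o * ?Ut" by (simp add: power2_eq_square)
  finally show ?thesis .
qed

lemma EDT_rationalI:
  assumes "efg G"
    and dev: "\<And>k. devs G i \<rho> (\<pi>s k)"
    and pos: "\<And>k I a. I \<in> infosets G i \<Longrightarrow> a \<in> iacts G I \<Longrightarrow> 0 < \<pi>s k I a"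
    and conv: "\<And>I a. (\<lambda>k. \<pi>s k I a) \<longlonglongrightarrow> \<rho> I a"
    and e_lim: "\<And>I. I \<in> infosets G i \<Longrightarrow> e I \<longlonglongrightarrow> 0"
    and e_bound: "\<And>k I \<sigma>. I \<in> infosets G i \<Longrightarrow> 0 < PI G (\<pi>s k) I \<Longrightarrow> behav G I \<sigma> \<Longrightarrow>
      (U G i ((\<pi>s k)(I := \<sigma>)) - U G i (\<pi>s k)) / PI G (\<pi>s k) I \<le> e I k"
  shows "EDT_rational G i \<rho>"
proof -
  define \<epsilon> where "\<epsilon> k = inverse (real (Suc k)) + (\<Sum>I \<in> infosets G i. \<bar>e I k\<bar>)" for k
  have lim: "\<epsilon> \<longlonglongrightarrow> 0 + (\<Sum>I \<in> infosets G i. 0)"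
    unfolding \<epsilon>_def
    by (intro tendsto_add LIMSEQ_inverse_real_of_nat tendsto_sum tendsto_rabs_zero e_lim)
  have e_le: "e I k \<le> \<epsilon> k" if "I \<in> infosets G i" for I k
  proof -
    have "e I k \<le> \<bar>e I k\<bar>" by simp
    also have "\<dots> \<le> (\<Sum>I \<in> infosets G i. \<bar>e I k\<bar>)"
      using that finite_infosets[OF assms(1)] by (intro member_le_sum) auto
    also have "\<dots> < \<epsilon> k" unfolding \<epsilon>_def by simp
    finally show ?thesis by simp
  qed
  show ?thesis unfolding EDT_rational_def
  proof (intro exI[of _ \<pi>s] exI[of _ \<epsilon>] conjI allI ballI impI)
    show "\<epsilon> \<longlonglongrightarrow> 0" using lim by simp
    fix k show "0 < \<epsilon> k" unfolding \<epsilon>_def by (simp add: add_pos_nonneg sum_nonneg)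
  next
    fix k I \<sigma> assume "I \<in> infosets G i" "0 < PI G (\<pi>s k) I" "behav G I \<sigma>"
    then show "(U G i ((\<pi>s k)(I := \<sigma>)) - U G i (\<pi>s k)) / PI G (\<pi>s k) I \<le> \<epsilon> k"
      using e_bound e_le order_trans by blast
  qed (use dev pos conv in auto)
qed

definition perturbed_devs :: "('a, 'p, 'i) game \<Rightarrow> 'p \<Rightarrow> ('i, 'a) profile \<Rightarrow> real \<Rightarrow> ('i, 'a) profile set"
  where
  "perturbed_devs G i \<pi> t = {\<tau>. devs G i \<pi> \<tau> \<and> (\<forall>I \<in> infosets G i. \<forall>a \<in> iacts G I. t \<le> \<tau> I a) \<and>
     (\<forall>I \<in> infosets G i. (\<exists>h \<in> inI G I. 0 < own_reach G i \<pi> h) \<longrightarrow> \<tau> I = uniform_mix G t I (\<pi> I))}"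

lemma perturbed_devs_nonempty:
  assumes "efg G" "profile G \<pi>" "0 \<le> t" "\<And>I. I \<in> infosets G i \<Longrightarrow> real (card (iacts G I)) * t \<le> 1"
  shows "perturbed_devs G i \<pi> t \<noteq> {}"
proof -
  define \<tau> where "\<tau> I = (if I \<in> infosets G i then uniform_mix G t I (\<pi> I) else \<pi> I)" for I
  note mix = uniform_mix_behav[OF assms(1) profile_behav[OF assms(2)] assms(3) assms(4)]
  have "profile G \<tau>" using assms(2) mix(1) by (auto simp: profile_def \<tau>_def)
  then have "\<tau> \<in> perturbed_devs G i \<pi> t" using mix(2) by (auto simp: perturbed_devs_def devs_def \<tau>_def)
  then show ?thesis by blast
qed

context
  fixes G :: "('a, 'p, 'i) game" and \<pi> :: "('i, 'a) profile" and i :: 'p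
    and \<theta> :: "nat \<Rightarrow> real" and \<pi>s :: "nat \<Rightarrow> ('i, 'a) profile" and \<rho> :: "('i, 'a) profile" and L :: nat
  assumes efg: "efg G" and pr: "perfect_recall G" and nash: "Nash G \<pi>"
    and \<theta>_pos: "\<And>k. 0 < \<theta> k"
    and \<theta>_card: "\<And>k I. I \<in> infosets G i \<Longrightarrow> real (card (iacts G I)) * \<theta> k \<le> 1"
    and \<theta>_lim: "\<theta> \<longlonglongrightarrow> 0"
    and perturbed: "\<And>k. \<pi>s k \<in> perturbed_devs G i \<pi> (\<theta> k)"
    and near_opt: "\<And>k \<tau>. \<tau> \<in> perturbed_devs G i \<pi> (\<theta> k) \<Longrightarrow> U G i \<tau> < U G i (\<pi>s k) + \<theta> k ^ Suc L"
    and depth: "\<And>h. h \<in> nodes G \<Longrightarrow> length h \<le> L"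
    and conv: "\<And>I a. (\<lambda>k. \<pi>s k I a) \<longlonglongrightarrow> \<rho> I a"
begin

lemma perturbed_seqD:
  shows "devs G i \<pi> (\<pi>s k)" "profile G (\<pi>s k)"
    and "\<And>J. J \<notin> infosets G i \<Longrightarrow> \<pi>s k J = \<pi> J"
    and "\<And>I a. I \<in> infosets G i \<Longrightarrow> a \<in> iacts G I \<Longrightarrow> \<theta> k \<le> \<pi>s k I a"
    and "\<And>I. I \<in> infosets G i \<Longrightarrow> \<exists>h \<in> inI G I. 0 < own_reach G i \<pi> h \<Longrightarrow>
      \<pi>s k I = uniform_mix G (\<theta> k) I (\<pi> I)"
  using perturbed[of k] by (auto simp: perturbed_devs_def devs_def)

lemma equilibrium_profile: "profile G \<pi>"
  using nash by (simp add: Nash_def)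

lemma limit_devs: "devs G i \<pi> \<rho>"
proof -
  have outside: "\<rho> J = \<pi> J" if "J \<notin> infosets G i" for J
  proof
    fix a
    have "(\<lambda>k. \<pi>s k J a) \<longlonglongrightarrow> \<pi> J a" using perturbed_seqD(3)[OF that] by simp
    then show "\<rho> J a = \<pi> J a" using LIMSEQ_unique[OF conv] by blast
  qed
  have "behav G J (\<rho> J)" if "J \<in> all_infosets G" for J
  proof (rule behav_limit[where \<sigma>s = "\<lambda>k. \<pi>s k J"])
    show "behav G J (\<pi>s k J)" for k using perturbed_seqD(2)[of k] that by (simp add: profile_def)
  qed (rule conv)
  then show ?thesis using outside by (simp add: devs_def profile_def)
qed

lemma limit_realization_equiv: "\<forall>h \<in> nodes G. reach G \<rho> h = reach G \<pi> h"
proof (rule realization_equiv_if_agree_on_own_reachable[OF efg equilibrium_profile limit_devs])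
  fix I assume "I \<in> infosets G i" "\<exists>h\<in>inI G I. 0 < own_reach G i \<pi> h"
  then have "(\<lambda>k. \<pi>s k I a) \<longlonglongrightarrow> \<pi> I a" for a
    using perturbed_seqD(5) uniform_mix_tendsto[OF \<theta>_lim profile_behav[OF equilibrium_profile]] by simp
  then show "\<rho> I = \<pi> I" using LIMSEQ_unique[OF conv] by blast
qed

lemma normalized_gain_le:
  assumes I: "I \<in> infosets G i" and pos: "0 < PI G (\<pi>s k) I"
    and gain: "U G i ((\<pi>s k)(I := \<sigma>)) - U G i (\<pi>s k) \<le> own_reach_at G i (\<pi>s k) I * B"
  shows "(U G i ((\<pi>s k)(I := \<sigma>)) - U G i (\<pi>s k)) / PI G (\<pi>s k) I \<le> B / cf_reach G i \<pi> I"
proof -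
  let ?o = "own_reach_at G i (\<pi>s k) I" and ?c = "cf_reach G i \<pi> I"
  have PI: "PI G (\<pi>s k) I = ?o * ?c"
    using PI_eq_cf_reach[OF efg pr I] cf_reach_cong[OF efg perturbed_seqD(3)] by simp
  have o_pos: "0 < ?o" using own_reach_at_pos[OF efg I] perturbed_seqD(4) \<theta>_pos
    by (meson less_le_trans)
  have "(U G i ((\<pi>s k)(I := \<sigma>)) - U G i (\<pi>s k)) / PI G (\<pi>s k) I \<le> ?o * B / PI G (\<pi>s k) I"
    using gain pos by (intro divide_right_mono) auto
  also have "\<dots> = B / ?c" using o_pos by (simp add: PI)
  finally show ?thesis .
qed

lemma cf_regret_vanishes:
  assumes "I \<in> infosets G i" "\<exists>h \<in> inI G I. 0 < own_reach G i \<pi> h"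
  shows "(\<lambda>k. cf_regret G i (\<pi>s k) I / cf_reach G i \<pi> I) \<longlonglongrightarrow> 0"
proof (cases "cf_reach G i \<pi> I = 0")
  case False
  then obtain h where h: "h \<in> inI G I" "others_reach G i \<pi> h \<noteq> 0"
    unfolding cf_reach_def by (meson sum.neutral)
  obtain h0 where h0: "h0 \<in> inI G I" "0 < own_reach G i \<pi> h0" using assms(2) by blast
  have "0 < others_reach G i \<pi> h"
    using h others_reach_bounds(1)[OF efg equilibrium_profile inI_nodes[OF h(1)], of i] by simp
  moreover have "own_reach G i \<pi> h = own_reach G i \<pi> h0"
    using own_reach_infoset[OF efg pr assms(1)] h(1) h0(1) by simp
  ultimately have "0 < reach G \<pi> h" using h0(2) reach_eq_own_others[of G \<pi> h i] by simp
  then have "cf_regret G i \<rho> I = 0"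
    by (rule Nash_cf_regret_eq_0[OF efg pr nash limit_devs limit_realization_equiv assms(1) h(1)])
  moreover have "(\<lambda>k. cf_regret G i (\<pi>s k) I) \<longlonglongrightarrow> cf_regret G i \<rho> I"
    by (rule cf_regret_tendsto[where f = \<pi>s and g = \<rho>, OF conv])
  ultimately show ?thesis by (simp add: tendsto_divide_zero)
qed simp

lemma off_path_gain_le:
  assumes I: "I \<in> infosets G i" "\<not> (\<exists>h \<in> inI G I. 0 < own_reach G i \<pi> h)" and \<sigma>: "behav G I \<sigma>"
  shows "U G i ((\<pi>s k)(I := \<sigma>)) - U G i (\<pi>s k) \<le>
    own_reach_at G i (\<pi>s k) I * (\<theta> k * (real (card (iacts G I))^2 * (\<Sum>z \<in> leaves G. util G i z) + 1))"
proof -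
  let ?t = "\<theta> k" and ?\<tau> = "\<pi>s k" and ?n = "real (card (iacts G I))"
  let ?\<sigma>' = "uniform_mix G ?t I \<sigma>"
  note mix = uniform_mix_behav[OF efg \<sigma> less_imp_le[OF \<theta>_pos] \<theta>_card[OF I(1)]]
  have "?\<tau>(I := ?\<sigma>') \<in> perturbed_devs G i \<pi> ?t"
    unfolding perturbed_devs_def
  proof (intro CollectI conjI ballI impI)
    show "devs G i \<pi> (?\<tau>(I := ?\<sigma>'))" by (rule devs_update[OF perturbed_seqD(1) I(1) mix(1)])
    show "?t \<le> (?\<tau>(I := ?\<sigma>')) J a" if "J \<in> infosets G i" "a \<in> iacts G J" for J a
      using that mix(2) perturbed_seqD(4)[OF that] by (cases "J = I") auto
    show "(?\<tau>(I := ?\<sigma>')) J = uniform_mix G ?t J (\<pi> J)"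
      if "J \<in> infosets G i" "\<exists>h \<in> inI G J. 0 < own_reach G i \<pi> h" for J
      using I(2) perturbed_seqD(5)[OF that] that(2) by (cases "J = I") simp_all
  qed
  then have near: "U G i (?\<tau>(I := ?\<sigma>')) < U G i ?\<tau> + ?t ^ Suc L" by (rule near_opt)
  have "1 \<le> ?n" using iacts_ne[OF efg I(1)] finite_iacts[OF efg] by (simp add: Suc_leI card_gt_0_iff)
  then have "1 * ?t \<le> ?n * ?t" using \<theta>_pos[of k] by (intro mult_right_mono) auto
  then have "?t \<le> 1" using \<theta>_card[OF I(1), of k] by simp
  then have "?t ^ L \<le> own_reach_at G i ?\<tau> I"
    using own_reach_at_ge_power[where \<tau> = ?\<tau>, OF efg I(1) less_imp_le[OF \<theta>_pos] _ perturbed_seqD(4) depth]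
    by blast
  then have "?t ^ Suc L \<le> ?t * own_reach_at G i ?\<tau> I" using \<theta>_pos[of k] by simp
  moreover have "U G i (?\<tau>(I := \<sigma>)) - U G i (?\<tau>(I := ?\<sigma>')) \<le>
      ?t * ?n^2 * own_reach_at G i ?\<tau> I * (\<Sum>z \<in> leaves G. util G i z)"
    by (rule U_update_uniform_mix_le[OF efg pr perturbed_seqD(2) I(1) \<sigma> less_imp_le[OF \<theta>_pos]])
  moreover have "own_reach_at G i ?\<tau> I * (?t * (?n^2 * (\<Sum>z \<in> leaves G. util G i z) + 1)) =
      ?t * ?n^2 * own_reach_at G i ?\<tau> I * (\<Sum>z \<in> leaves G. util G i z) + ?t * own_reach_at G i ?\<tau> I"
    by (simp add: algebra_simps)
  ultimately show ?thesis using near by linarith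
qed

lemma limit_EDT_rational: "EDT_rational G i \<rho>"
proof -
  let ?Ut = "\<Sum>z \<in> leaves G. util G i z"
  let ?R = "\<lambda>I. \<exists>h \<in> inI G I. 0 < own_reach G i \<pi> h"
  define e where "e I = (if ?R I then (\<lambda>k. cf_regret G i (\<pi>s k) I / cf_reach G i \<pi> I)
    else (\<lambda>k. \<theta> k * (real (card (iacts G I))^2 * ?Ut + 1) / cf_reach G i \<pi> I))" for I
  show ?thesis
  proof (rule EDT_rationalI[where \<pi>s = \<pi>s and e = e, OF efg _ _ conv])
    show "devs G i \<rho> (\<pi>s k)" for k
      using perturbed_seqD(2,3) limit_devs by (auto simp: devs_def)
    show "0 < \<pi>s k I a" if "I \<in> infosets G i" "a \<in> iacts G I" for k I a
      using perturbed_seqD(4)[where k = k, OF that] \<theta>_pos[of k] by linarith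
    show "e I \<longlonglongrightarrow> 0" if "I \<in> infosets G i" for I
    proof (cases "?R I")
      case True then show ?thesis using cf_regret_vanishes[OF that] by (simp add: e_def)
    next
      case False
      have "(\<lambda>k. \<theta> k * (real (card (iacts G I))^2 * ?Ut + 1)) \<longlonglongrightarrow> 0 * (real (card (iacts G I))^2 * ?Ut + 1)"
        by (intro tendsto_mult_right \<theta>_lim)
      then have "(\<lambda>k. \<theta> k * (real (card (iacts G I))^2 * ?Ut + 1) / cf_reach G i \<pi> I) \<longlonglongrightarrow> 0"
        by (simp add: tendsto_divide_zero)
      then show ?thesis using False by (simp add: e_def)
    qed
  next
    fix k I \<sigma> assume I: "I \<in> infosets G i" and pos: "0 < PI G (\<pi>s k) I" and \<sigma>: "behav G I \<sigma>"
    show "(U G i ((\<pi>s k)(I := \<sigma>)) - U G i (\<pi>s k)) / PI G (\<pi>s k) I \<le> e I k"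
    proof (cases "?R I")
      case True
      then show ?thesis
        using normalized_gain_le[OF I pos U_update_le_cf_regret[OF efg pr perturbed_seqD(2) I \<sigma>]]
        by (simp add: e_def)
    next
      case False
      then show ?thesis
        using normalized_gain_le[OF I pos off_path_gain_le[OF I False \<sigma>]] by (simp add: e_def)
    qed
  qed
qed

end

lemma vanishing_perturbation_exists:
  assumes "efg G"
  obtains \<theta> :: "nat \<Rightarrow> real" where "\<And>k. 0 < \<theta> k"
    "\<And>k I. I \<in> infosets G i \<Longrightarrow> real (card (iacts G I)) * \<theta> k \<le> 1" "\<theta> \<longlonglongrightarrow> 0"
proof
  define N where "N = 1 + (\<Sum>I \<in> infosets G i. card (iacts G I))"
  define \<theta> where "\<theta> k = 1 / (real N * real (Suc k))" for k
  have "0 < N" by (simp add: N_def)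
  then have N_pos: "0 < real N" by simp
  show \<theta>_pos: "0 < \<theta> k" for k unfolding \<theta>_def using N_pos by simp
  show "real (card (iacts G I)) * \<theta> k \<le> 1" if "I \<in> infosets G i" for I k
  proof -
    have "card (iacts G I) \<le> (\<Sum>I \<in> infosets G i. card (iacts G I))"
      using that finite_infosets[OF assms(1)] by (intro member_le_sum) auto
    then have "card (iacts G I) \<le> N" unfolding N_def by simp
    then have "real (card (iacts G I)) \<le> real N" by (simp only: of_nat_le_iff)
    then have "real (card (iacts G I)) * \<theta> k \<le> real N * \<theta> k"
      using \<theta>_pos[of k] by (intro mult_right_mono) auto
    also have "\<dots> = 1 / real (Suc k)" unfolding \<theta>_def using N_pos by simp
    also have "\<dots> \<le> 1" by simp
    finally show ?thesis .
  qed
  show "\<theta> \<longlonglongrightarrow> 0"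
    unfolding \<theta>_def using tendsto_mult_right_zero[OF LIMSEQ_inverse_real_of_nat, of "1 / real N"]
    by (simp add: divide_inverse mult.commute)
qed

lemma Nash_imp_EDT_rational:
  assumes "efg G" "perfect_recall G" "Nash G \<pi>"
  shows "\<exists>\<rho>. devs G i \<pi> \<rho> \<and> (\<forall>h \<in> nodes G. reach G \<rho> h = reach G \<pi> h) \<and> EDT_rational G i \<rho>"
proof -
  have P: "profile G \<pi>" using assms(3) by (simp add: Nash_def)
  obtain \<theta> where \<theta>_pos: "\<And>k. 0 < \<theta> k"
    and \<theta>_card: "\<And>k I. I \<in> infosets G i \<Longrightarrow> real (card (iacts G I)) * \<theta> k \<le> 1"
    and \<theta>_lim: "\<theta> \<longlonglongrightarrow> 0"
    using vanishing_perturbation_exists[OF assms(1)] by blast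
  define L where "L = Max (length ` nodes G)"
  have depth: "length h \<le> L" if "h \<in> nodes G" for h
  proof -
    have "finite (nodes G)" using assms(1) by (simp add: efg_def)
    then show ?thesis unfolding L_def using that by (simp add: Max_ge)
  qed
  have "\<exists>\<tau>\<in>perturbed_devs G i \<pi> (\<theta> k). \<forall>\<tau>'\<in>perturbed_devs G i \<pi> (\<theta> k).
      U G i \<tau>' < U G i \<tau> + \<theta> k ^ Suc L" for k
    using perturbed_devs_nonempty[OF assms(1) P less_imp_le[OF \<theta>_pos] \<theta>_card]
      U_le_total_util[OF assms(1)] \<theta>_pos[of k]
    by (intro exists_near_max) (auto simp: perturbed_devs_def devs_def)
  then obtain f where f: "\<And>k. f k \<in> perturbed_devs G i \<pi> (\<theta> k)"
    and near: "\<And>k \<tau>. \<tau> \<in> perturbed_devs G i \<pi> (\<theta> k) \<Longrightarrow> U G i \<tau> < U G i (f k) + \<theta> k ^ Suc L"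
    by metis
  obtain r \<rho> where r: "strict_mono r" and conv: "\<And>I a. (\<lambda>k. f (r k) I a) \<longlonglongrightarrow> \<rho> I a"
    using devs_convergent_subseq[OF assms(1), of i \<pi> f] f by (auto simp: perturbed_devs_def)
  have lim_r: "(\<theta> \<circ> r) \<longlonglongrightarrow> 0" using LIMSEQ_subseq_LIMSEQ[OF \<theta>_lim r] .
  have pos_r: "0 < (\<theta> \<circ> r) k" for k using \<theta>_pos by simp
  have card_r: "real (card (iacts G I)) * (\<theta> \<circ> r) k \<le> 1" if "I \<in> infosets G i" for I k
    using \<theta>_card[OF that] by simp
  have f_r: "(f \<circ> r) k \<in> perturbed_devs G i \<pi> ((\<theta> \<circ> r) k)" for k using f by simp
  have near_r: "U G i \<tau> < U G i ((f \<circ> r) k) + (\<theta> \<circ> r) k ^ Suc L"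
    if "\<tau> \<in> perturbed_devs G i \<pi> ((\<theta> \<circ> r) k)" for k \<tau>
    using near that by simp
  have conv_r: "(\<lambda>k. (f \<circ> r) k I a) \<longlonglongrightarrow> \<rho> I a" for I a using conv by (simp add: o_def)
  note limit = limit_devs limit_realization_equiv limit_EDT_rational
  show ?thesis
    using limit[where i = i, OF assms pos_r card_r lim_r f_r near_r depth conv_r] by blast
qed

theorem proposition4:
  fixes G :: "('a, 'p, 'i) game"
  assumes "efg G"
  shows "(\<forall>\<pi>. EDT_Nash G \<pi> \<longrightarrow> EDT_eq G \<pi>)
       \<and> (\<not> absentminded G \<longrightarrow> (\<forall>\<pi>. EDT_Nash G \<pi> \<longleftrightarrow> CDT_Nash G \<pi>))
       \<and> (perfect_recall G \<longrightarrow> (\<forall>\<pi>. EDT_Nash G \<pi> \<longleftrightarrow> Nash G \<pi>))"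
proof (intro conjI impI allI)
  fix \<pi> assume "EDT_Nash G \<pi>" then show "EDT_eq G \<pi>" by (simp add: EDT_Nash_def)
next
  fix \<pi> assume "\<not> absentminded G"
  then show "EDT_Nash G \<pi> \<longleftrightarrow> CDT_Nash G \<pi>" by (rule EDT_Nash_iff_CDT_Nash[OF assms])
next
  fix \<pi> assume pr: "perfect_recall G"
  show "EDT_Nash G \<pi> \<longleftrightarrow> Nash G \<pi>"
  proof
    assume "EDT_Nash G \<pi>" then show "Nash G \<pi>" by (rule EDT_Nash_imp_Nash[OF assms pr])
  next
    assume "Nash G \<pi>"
    then show "EDT_Nash G \<pi>"
      unfolding EDT_Nash_def using Nash_imp_EDT_eq Nash_imp_EDT_rational[OF assms pr] by blast
  qed
qed

end
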